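(* Let $d_1,d_2\in\mathbb{Z}$ with $d_1>0$ and $d_2<d_1$. Then for each $\delta>0$ there exists $f\in\mathcal{E}_{d_1}$ such that $$\int_{\mathbb{S}^1}|\dot f-\dot g|\ge(2\pi-\delta)(d_1-d_2)\quad\text{for all } g\in\mathcal{E}_{d_2}.$$
   Context: $W^{1,1}(\mathbb{S}^1;\mathbb{S}^1)=\{f\in W^{1,1}(\mathbb{S}^1;\mathbb{R}^2):|f|=1\}$ (such maps are continuous); $\dot f$ is the derivative with respect to arclength; $\mathcal{E}_d=\{f\in W^{1,1}(\mathbb{S}^1;\mathbb{S}^1):\deg f=d\}$. *)

theory Defs
  imports "HOL-Complex_Analysis.Complex_Analysis"
begin

text \<open>The circle S^1 is parametrized by arclength t in [0, 2*pi] (t maps to exp(i t)),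
  and R^2 is identified with the complex plane.  A map f in W^{1,1}(S^1;S^1) is represented
  by a function f :: real => complex on [0,2*pi] together with its arclength derivative fd:
  fd is (absolutely) integrable on [0,2*pi], f is its indefinite integral (so f is
  absolutely continuous, the W^{1,1} condition in one dimension), f closes up
  (f 0 = f (2*pi)), and |f| = 1.\<close>

definition W11_circle :: "(real \<Rightarrow> complex) \<Rightarrow> (real \<Rightarrow> complex) \<Rightarrow> bool" where
  "W11_circle f fd \<longleftrightarrow>
     fd absolutely_integrable_on {0..2*pi} \<and>
     (\<forall>t\<in>{0..2*pi}. f t = f 0 + integral {0..t} fd) \<and>
     f (2*pi) = f 0 \<and>
     (\<forall>t\<in>{0..2*pi}. norm (f t) = 1)"

definition circle_deg :: "(real \<Rightarrow> complex) \<Rightarrow> complex" where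
  "circle_deg f = winding_number (\<lambda>u. f (2*pi*u)) 0"

end

theory Submission
  imports Defs
begin

text \<open>
  The extremal map is \<open>f = exp (\<i> \<phi>)\<close> with a zigzag phase \<open>\<phi>\<close>: on a fine grid its slope
  alternates between \<open>L\<close> and \<open>-L\<close>, with mean slope \<open>d\<^sub>1\<close>, so \<open>|f'| = L\<close> while \<open>\<phi>\<close> stays
  close to \<open>d\<^sub>1 t\<close>. For \<open>g = exp (\<i> \<psi>)\<close> of degree \<open>d\<^sub>2\<close> put \<open>\<theta> = \<psi> - \<phi>\<close>. Pairing
  \<open>f' - g'\<close> with a unit vector built from \<open>f\<close>, \<open>g\<close> and \<open>\<theta>\<close> bounds \<open>|f' - g'|\<close> from below
  by a calibration whose integral is essentially
  \<open>-\<integral>(1 - haversin \<theta>\<^sup>N\<^sup>+\<^sup>1) \<theta>' = 2\<pi> (d\<^sub>1 - d\<^sub>2) (1 - hav_mean (N+1))\<close>: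
  the terms containing \<open>Re (cnj g * g')\<close> integrate to zero because \<open>|g| = 1\<close>, and the term
  containing \<open>\<phi>' - d\<^sub>1\<close> is small after an integration by parts. Letting \<open>N\<close>, then \<open>L\<close>, then
  the grid resolution grow yields the bound \<open>(2\<pi> - \<delta>)(d\<^sub>1 - d\<^sub>2)\<close>.
\<close>

section \<open>Functions with a locally small increment\<close>

lemma abs_diff_le_of_local_bound:
  fixes E V :: "real \<Rightarrow> real"
  assumes "\<eta> > 0" "a \<le> b"
    and local: "\<And>s t. a \<le> s \<Longrightarrow> s \<le> t \<Longrightarrow> t \<le> b \<Longrightarrow> t - s \<le> \<eta> \<Longrightarrow> \<bar>E t - E s\<bar> \<le> V t - V s"
  shows "\<bar>E b - E a\<bar> \<le> V b - V a"
proof -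
  have steps: "\<bar>E b - E s\<bar> \<le> V b - V s" if "a \<le> s" "s \<le> b" "b - s \<le> real m * \<eta>" for m s
    using that
  proof (induction m arbitrary: s)
    case 0
    then show ?case by simp
  next
    case (Suc m)
    show ?case
    proof (cases "b - s \<le> \<eta>")
      case True
      then show ?thesis using local Suc.prems by auto
    next
      case False
      have "\<bar>E b - E (s + \<eta>)\<bar> \<le> V b - V (s + \<eta>)"
        using Suc.IH[of "s + \<eta>"] Suc.prems False \<open>\<eta> > 0\<close> by (auto simp: algebra_simps)
      moreover have "\<bar>E (s + \<eta>) - E s\<bar> \<le> V (s + \<eta>) - V s"
        using local[of s "s + \<eta>"] Suc.prems False \<open>\<eta> > 0\<close> by auto
      ultimately show ?thesis by linarith
    qed
  qed
  obtain m :: nat where "(b - a) / \<eta> \<le> real m"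
    using real_arch_simple by blast
  then have "b - a \<le> real m * \<eta>"
    using \<open>\<eta> > 0\<close> by (simp add: divide_le_eq)
  then show ?thesis
    using steps[of a m] \<open>a \<le> b\<close> by simp
qed

lemma locally_dominated_imp_constant:
  fixes E w :: "real \<Rightarrow> real"
  assumes w: "w integrable_on {a..b}"
    and local: "\<And>e. e > 0 \<Longrightarrow> \<exists>\<eta>>0. \<forall>s t. a \<le> s \<longrightarrow> s \<le> t \<longrightarrow> t \<le> b \<longrightarrow> t - s \<le> \<eta> \<longrightarrow>
                   \<bar>E t - E s\<bar> \<le> e * integral {s..t} w"
    and t: "t \<in> {a..b}"
  shows "E t = E a"
proof -
  define V where "V x = integral {a..x} w" for x
  have V_diff: "V y - V x = integral {x..y} w" if "a \<le> x" "x \<le> y" "y \<le> b" for x y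
  proof -
    have "integral {a..x} w + integral {x..y} w = integral {a..y} w"
      using that w by (intro Henstock_Kurzweil_Integration.integral_combine)
        (auto intro: integrable_subinterval_real)
    then show ?thesis unfolding V_def by simp
  qed
  have bound: "\<bar>E t - E a\<bar> \<le> e * (V t - V a)" if "e > 0" for e
  proof -
    obtain \<eta> where "\<eta> > 0" and \<eta>: "\<And>s u. a \<le> s \<Longrightarrow> s \<le> u \<Longrightarrow> u \<le> b \<Longrightarrow> u - s \<le> \<eta> \<Longrightarrow>
        \<bar>E u - E s\<bar> \<le> e * integral {s..u} w"
      using local[OF \<open>e > 0\<close>] by blast
    have "\<bar>E t - E a\<bar> \<le> (\<lambda>x. e * V x) t - (\<lambda>x. e * V x) a"
    proof (rule abs_diff_le_of_local_bound[OF \<open>\<eta> > 0\<close>])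
      fix s u assume "a \<le> s" "s \<le> u" "u \<le> t" "u - s \<le> \<eta>"
      then show "\<bar>E u - E s\<bar> \<le> e * V u - e * V s"
        using \<eta>[of s u] V_diff[of s u] t by (auto simp: right_diff_distrib[symmetric])
    qed (use t in auto)
    then show ?thesis by (simp add: right_diff_distrib)
  qed
  have D: "V t - V a \<ge> 0"
    using bound[of 1] abs_ge_zero[of "E t - E a"] by simp
  have "\<bar>E t - E a\<bar> \<le> 0"
  proof (rule field_le_epsilon)
    fix e :: real assume "e > 0"
    have "\<bar>E t - E a\<bar> \<le> e / (V t - V a + 1) * (V t - V a)"
      using bound[of "e / (V t - V a + 1)"] D \<open>e > 0\<close> by simp
    also have "\<dots> \<le> e" using D \<open>e > 0\<close> by (simp add: field_simps)
    finally show "\<bar>E t - E a\<bar> \<le> 0 + e" by simp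
  qed
  then show ?thesis by simp
qed

section \<open>Absolutely continuous real functions\<close>

lemma continuous_on_indefinite_integral:
  fixes F F' :: "real \<Rightarrow> 'a::banach"
  assumes "F' integrable_on {a..b}" "\<And>t. t \<in> {a..b} \<Longrightarrow> F t = F a + integral {a..t} F'"
  shows "continuous_on {a..b} F"
proof -
  have "continuous_on {a..b} (\<lambda>t. F a + integral {a..t} F')"
    by (intro continuous_intros indefinite_integral_continuous_1 assms)
  then show ?thesis by (rule continuous_on_eq) (metis assms(2))
qed

lemma indefinite_integral_diff:
  fixes F F' :: "real \<Rightarrow> 'a::banach"
  assumes F': "F' integrable_on {a..b}" and F: "\<And>t. t \<in> {a..b} \<Longrightarrow> F t = F a + integral {a..t} F'"
    and "a \<le> s" "s \<le> t" "t \<le> b"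
  shows "F t - F s = integral {s..t} F'"
proof -
  have "integral {a..s} F' + integral {s..t} F' = integral {a..t} F'"
    using F' assms(3-5) by (intro Henstock_Kurzweil_Integration.integral_combine)
      (auto intro: integrable_subinterval_real)
  moreover have "F t = F a + integral {a..t} F'" "F s = F a + integral {a..s} F'"
    using F[of t] F[of s] assms(3-5) by auto
  ultimately show ?thesis by (simp add: algebra_simps)
qed

lemma absolutely_integrable_continuous_mult:
  fixes K F' :: "real \<Rightarrow> real"
  assumes "continuous_on {a..b} K" "F' absolutely_integrable_on {a..b}"
  shows "(\<lambda>t. K t * F' t) absolutely_integrable_on {a..b}"
proof (rule absolutely_integrable_bounded_measurable_product_real)
  show "K \<in> borel_measurable (lebesgue_on {a..b})"
    using assms(1) by (intro continuous_imp_measurable_on_sets_lebesgue) auto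
  show "bounded (K ` {a..b})"
    using assms(1) by (intro compact_imp_bounded compact_continuous_image) auto
qed (use assms in auto)

definition W11_on :: "real \<Rightarrow> real \<Rightarrow> (real \<Rightarrow> real) \<Rightarrow> (real \<Rightarrow> real) \<Rightarrow> bool" where
  "W11_on a b F F' \<longleftrightarrow>
     F' absolutely_integrable_on {a..b} \<and> (\<forall>t\<in>{a..b}. F t = F a + integral {a..t} F')"

lemma W11_onI:
  assumes "F' absolutely_integrable_on {a..b}" "\<And>t. t \<in> {a..b} \<Longrightarrow> F t = F a + integral {a..t} F'"
  shows "W11_on a b F F'"
  using assms unfolding W11_on_def by blast

lemma W11_on_absolutely_integrable: "W11_on a b F F' \<Longrightarrow> F' absolutely_integrable_on {a..b}"
  by (simp add: W11_on_def)

lemma W11_on_integrable: "W11_on a b F F' \<Longrightarrow> F' integrable_on {a..b}"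
  by (simp add: W11_on_def absolutely_integrable_on_def)

lemma W11_on_abs_integrable: "W11_on a b F F' \<Longrightarrow> (\<lambda>t. \<bar>F' t\<bar>) integrable_on {a..b}"
  by (simp add: W11_on_def absolutely_integrable_on_def)

lemma W11_on_eq: "W11_on a b F F' \<Longrightarrow> t \<in> {a..b} \<Longrightarrow> F t = F a + integral {a..t} F'"
  unfolding W11_on_def by blast

lemma W11_on_continuous:
  assumes "W11_on a b F F'"
  shows "continuous_on {a..b} F"
  by (rule continuous_on_indefinite_integral[OF W11_on_integrable[OF assms] W11_on_eq[OF assms]])

lemma W11_on_integral:
  assumes "W11_on a b F F'" "a \<le> s" "s \<le> t" "t \<le> b"
  shows "integral {s..t} F' = F t - F s"
  using indefinite_integral_diff[OF W11_on_integrable[OF assms(1)] W11_on_eq[OF assms(1)] assms(2-4)]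
  by simp

lemma W11_on_has_integral:
  assumes "W11_on a b F F'" "a \<le> b"
  shows "(F' has_integral (F b - F a)) {a..b}"
  using integrable_integral[OF W11_on_integrable[OF assms(1)]] W11_on_integral[OF assms(1) order_refl assms(2) order_refl]
  by simp

lemma W11_on_subinterval:
  assumes "W11_on a b F F'" "a \<le> c" "c \<le> d" "d \<le> b"
  shows "W11_on c d F F'"
proof (rule W11_onI)
  show "F' absolutely_integrable_on {c..d}"
    using W11_on_absolutely_integrable[OF assms(1)] assms
    by (meson absolutely_integrable_on_subinterval atLeastatMost_subset_iff order_refl)
  fix t assume "t \<in> {c..d}"
  then show "F t = F c + integral {c..t} F'"
    using W11_on_integral[OF assms(1), of c t] assms by auto
qed

lemma W11_on_cong:
  assumes "W11_on a b F F'" "a \<le> b"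
    and "\<And>t. t \<in> {a..b} \<Longrightarrow> F t = H t" "\<And>t. t \<in> {a..b} \<Longrightarrow> F' t = H' t"
  shows "W11_on a b H H'"
proof (rule W11_onI)
  show "H' absolutely_integrable_on {a..b}"
    using absolutely_integrable_spike[OF W11_on_absolutely_integrable[OF assms(1)], of "{}" H'] assms(4)
    by simp
  fix t assume t: "t \<in> {a..b}"
  have "integral {a..t} F' = integral {a..t} H'"
    using assms(4) t by (intro integral_cong) auto
  then show "H t = H a + integral {a..t} H'"
    using W11_on_eq[OF assms(1) t] assms(2,3) t by auto
qed

lemma W11_on_const: "W11_on a b (\<lambda>t. c) (\<lambda>t. 0)"
  by (simp add: W11_on_def)

lemma W11_on_ident: "W11_on a b (\<lambda>t. t) (\<lambda>t. 1)"
  by (rule W11_onI) (auto simp: absolutely_integrable_on_def)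

lemma W11_on_add:
  assumes "W11_on a b F F'" "W11_on a b H H'"
  shows "W11_on a b (\<lambda>t. F t + H t) (\<lambda>t. F' t + H' t)"
proof (rule W11_onI)
  show "(\<lambda>t. F' t + H' t) absolutely_integrable_on {a..b}"
    using assms by (intro set_integral_add(1) W11_on_absolutely_integrable)
  fix t assume t: "t \<in> {a..b}"
  have "integral {a..t} (\<lambda>t. F' t + H' t) = integral {a..t} F' + integral {a..t} H'"
    using W11_on_integrable[OF assms(1)] W11_on_integrable[OF assms(2)] t
    by (intro integral_add) (auto intro: integrable_subinterval_real)
  then show "F t + H t = F a + H a + integral {a..t} (\<lambda>t. F' t + H' t)"
    using W11_on_eq[OF assms(1) t] W11_on_eq[OF assms(2) t] by simp
qed

lemma W11_on_cmult:
  assumes "W11_on a b F F'"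
  shows "W11_on a b (\<lambda>t. c * F t) (\<lambda>t. c * F' t)"
proof (rule W11_onI)
  show "(\<lambda>t. c * F' t) absolutely_integrable_on {a..b}"
    using assms by (intro set_integrable_mult_right W11_on_absolutely_integrable)
  fix t assume "t \<in> {a..b}"
  then show "c * F t = c * F a + integral {a..t} (\<lambda>t. c * F' t)"
    using W11_on_eq[OF assms \<open>t \<in> {a..b}\<close>] by (simp add: algebra_simps)
qed

lemma W11_on_diff:
  assumes "W11_on a b F F'" "W11_on a b H H'"
  shows "W11_on a b (\<lambda>t. F t - H t) (\<lambda>t. F' t - H' t)"
  using W11_on_add[OF assms(1) W11_on_cmult[OF assms(2), of "-1"]] by simp

lemma real_mvt_segment:
  fixes G G' :: "real \<Rightarrow> real"
  assumes "\<And>x. (G has_real_derivative G' x) (at x)"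
  obtains \<xi> where "\<xi> \<in> closed_segment u v" "G v - G u = G' \<xi> * (v - u)"
proof -
  have mvt: "\<exists>\<xi>\<in>{x..y}. G y - G x = G' \<xi> * (y - x)" if "x \<le> y" for x y
    using mvt_very_simple[OF that, of G "\<lambda>x h. G' x * h"] assms
    by (metis has_field_derivative_imp_has_derivative has_derivative_at_withinI mult.commute)
  show ?thesis
  proof (cases "u \<le> v")
    case True
    then show ?thesis using mvt[OF True] that by (auto simp: closed_segment_eq_real_ivl)
  next
    case False
    then obtain \<xi> where "\<xi> \<in> {v..u}" "G u - G v = G' \<xi> * (u - v)" using mvt[of v u] by auto
    then show ?thesis using that False by (auto simp: closed_segment_eq_real_ivl algebra_simps)
  qed
qed

lemma comp_increment_estimate:
  fixes G G' F F' :: "real \<Rightarrow> real"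
  assumes F: "W11_on s u F F'" and "s \<le> u"
    and G: "\<And>x. (G has_real_derivative G' x) (at x)" and cG': "continuous_on UNIV G'"
    and osc: "\<And>r \<xi>. r \<in> {s..u} \<Longrightarrow> \<xi> \<in> closed_segment (F s) (F u) \<Longrightarrow> \<bar>G' \<xi> - G' (F r)\<bar> \<le> e"
  shows "\<bar>G (F u) - G (F s) - integral {s..u} (\<lambda>r. G' (F r) * F' r)\<bar> \<le> e * integral {s..u} (\<lambda>r. \<bar>F' r\<bar>)"
proof -
  let ?h = "\<lambda>r. G' (F r) * F' r"
  have "?h absolutely_integrable_on {s..u}"
    using W11_on_absolutely_integrable[OF F] W11_on_continuous[OF F]
    by (intro absolutely_integrable_continuous_mult continuous_on_compose2[OF cG']) auto
  then have hI: "?h integrable_on {s..u}" by (simp add: absolutely_integrable_on_def)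
  have F'I: "F' integrable_on {s..u}" using W11_on_integrable[OF F] .
  obtain \<xi> where \<xi>: "\<xi> \<in> closed_segment (F s) (F u)" and mvt: "G (F u) - G (F s) = G' \<xi> * (F u - F s)"
    using real_mvt_segment[OF G] by blast
  have "G (F u) - G (F s) - integral {s..u} ?h = G' \<xi> * integral {s..u} F' - integral {s..u} ?h"
    using mvt W11_on_integral[OF F order_refl \<open>s \<le> u\<close> order_refl] by simp
  also have "\<dots> = integral {s..u} (\<lambda>r. G' \<xi> * F' r - ?h r)"
    using integral_diff[OF integrable_on_mult_right[OF F'I] hI] by simp
  also have "\<dots> = integral {s..u} (\<lambda>r. (G' \<xi> - G' (F r)) * F' r)"
    by (simp add: left_diff_distrib)
  finally have eq: "G (F u) - G (F s) - integral {s..u} ?h = integral {s..u} (\<lambda>r. (G' \<xi> - G' (F r)) * F' r)" .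
  have "norm (integral {s..u} (\<lambda>r. (G' \<xi> - G' (F r)) * F' r)) \<le> integral {s..u} (\<lambda>r. e * \<bar>F' r\<bar>)"
  proof (rule integral_norm_bound_integral)
    show "(\<lambda>r. (G' \<xi> - G' (F r)) * F' r) integrable_on {s..u}"
      using integrable_diff[OF integrable_on_mult_right[OF F'I] hI] by (simp add: left_diff_distrib)
    show "(\<lambda>r. e * \<bar>F' r\<bar>) integrable_on {s..u}"
      using W11_on_abs_integrable[OF F] by (rule integrable_on_mult_right)
    show "norm ((G' \<xi> - G' (F r)) * F' r) \<le> e * \<bar>F' r\<bar>" if "r \<in> {s..u}" for r
      using osc[OF that \<xi>] by (simp add: abs_mult mult_right_mono)
  qed
  then show ?thesis unfolding eq by simp
qed

lemma W11_on_chain: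
  fixes G G' :: "real \<Rightarrow> real"
  assumes F: "W11_on a b F F'" and G: "\<And>x. (G has_real_derivative G' x) (at x)"
    and cG': "continuous_on UNIV G'"
  shows "W11_on a b (\<lambda>t. G (F t)) (\<lambda>t. G' (F t) * F' t)"
proof (rule W11_onI)
  let ?h = "\<lambda>t. G' (F t) * F' t"
  have contF: "continuous_on {a..b} F" using W11_on_continuous[OF F] .
  show "?h absolutely_integrable_on {a..b}"
    using W11_on_absolutely_integrable[OF F] contF
    by (intro absolutely_integrable_continuous_mult continuous_on_compose2[OF cG']) auto
  then have hI: "?h integrable_on {a..b}" by (simp add: absolutely_integrable_on_def)
  obtain R where R: "\<And>t. t \<in> {a..b} \<Longrightarrow> \<bar>F t\<bar> \<le> R"
    using compact_imp_bounded[OF compact_continuous_image[OF contF compact_Icc]]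
    unfolding bounded_iff by (metis image_eqI real_norm_def)
  have ucG: "uniformly_continuous_on {-R..R} G'"
    by (intro compact_uniformly_continuous continuous_on_subset[OF cG']) auto
  have ucF: "uniformly_continuous_on {a..b} F"
    by (intro compact_uniformly_continuous contF) auto
  define E where "E t = G (F t) - integral {a..t} ?h" for t
  fix t assume t: "t \<in> {a..b}"
  have "E t = E a"
  proof (rule locally_dominated_imp_constant[OF W11_on_abs_integrable[OF F] _ t])
    fix e :: real assume "e > 0"
    obtain d where "d > 0"
      and dG: "\<And>x y. x \<in> {-R..R} \<Longrightarrow> y \<in> {-R..R} \<Longrightarrow> \<bar>y - x\<bar> < d \<Longrightarrow> \<bar>G' y - G' x\<bar> < e"
      using ucG \<open>e > 0\<close> unfolding uniformly_continuous_on_def dist_real_def by metis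
    obtain \<eta> where "\<eta> > 0"
      and dF: "\<And>x y. x \<in> {a..b} \<Longrightarrow> y \<in> {a..b} \<Longrightarrow> \<bar>y - x\<bar> < \<eta> \<Longrightarrow> \<bar>F y - F x\<bar> < d/2"
      using ucF \<open>d > 0\<close> unfolding uniformly_continuous_on_def dist_real_def by (metis half_gt_zero)
    have "\<bar>E u - E s\<bar> \<le> e * integral {s..u} (\<lambda>t. \<bar>F' t\<bar>)"
      if su: "a \<le> s" "s \<le> u" "u \<le> b" "u - s \<le> \<eta>/2" for s u
    proof -
      have "E u - E s = G (F u) - G (F s) - integral {s..u} ?h"
        using indefinite_integral_diff[OF hI, of "\<lambda>x. integral {a..x} ?h" s u] su by (simp add: E_def)
      also have "\<bar>\<dots>\<bar> \<le> e * integral {s..u} (\<lambda>t. \<bar>F' t\<bar>)"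
      proof (rule comp_increment_estimate[OF W11_on_subinterval[OF F su(1-3)] su(2) G cG'])
        fix r \<xi> assume r: "r \<in> {s..u}" and \<xi>: "\<xi> \<in> closed_segment (F s) (F u)"
        have "\<bar>F r - F s\<bar> < d/2" "\<bar>F u - F s\<bar> < d/2"
          using dF[of s r] dF[of s u] r su \<open>\<eta> > 0\<close> by auto
        moreover have "\<bar>\<xi> - F s\<bar> \<le> \<bar>F u - F s\<bar>" and "\<xi> \<in> {-R..R}"
          using \<xi> R[of s] R[of u] su by (auto simp: closed_segment_eq_real_ivl split: if_splits)
        ultimately have "\<bar>F r - \<xi>\<bar> < d" by linarith
        then show "\<bar>G' \<xi> - G' (F r)\<bar> \<le> e"
          using dG[of \<xi> "F r"] \<open>\<xi> \<in> {-R..R}\<close> R[of r] r su by (auto simp: abs_le_iff)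
      qed
      finally show ?thesis .
    qed
    then show "\<exists>\<eta>>0. \<forall>s u. a \<le> s \<longrightarrow> s \<le> u \<longrightarrow> u \<le> b \<longrightarrow> u - s \<le> \<eta> \<longrightarrow>
        \<bar>E u - E s\<bar> \<le> e * integral {s..u} (\<lambda>t. \<bar>F' t\<bar>)"
      using \<open>\<eta> > 0\<close> by (intro exI[of _ "\<eta>/2"]) auto
  qed
  then show "G (F t) = G (F a) + integral {a..t} ?h" by (simp add: E_def)
qed

lemma W11_on_power2:
  assumes "W11_on a b F F'"
  shows "W11_on a b (\<lambda>t. (F t)\<^sup>2) (\<lambda>t. 2 * F t * F' t)"
proof -
  have "W11_on a b (\<lambda>t. (\<lambda>x. x\<^sup>2) (F t)) (\<lambda>t. (\<lambda>x. 2 * x) (F t) * F' t)"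
    by (rule W11_on_chain[OF assms]) (auto intro!: derivative_eq_intros continuous_intros)
  then show ?thesis by simp
qed

lemma W11_on_mult:
  assumes "W11_on a b F F'" "W11_on a b H H'" "a \<le> b"
  shows "W11_on a b (\<lambda>t. F t * H t) (\<lambda>t. F' t * H t + F t * H' t)"
proof -
  have "W11_on a b (\<lambda>t. (1/4) * ((F t + H t)\<^sup>2 - (F t - H t)\<^sup>2))
     (\<lambda>t. (1/4) * (2 * (F t + H t) * (F' t + H' t) - 2 * (F t - H t) * (F' t - H' t)))"
    by (intro W11_on_cmult W11_on_diff W11_on_power2 W11_on_add assms)
  then show ?thesis by (rule W11_on_cong) (auto simp: algebra_simps power2_eq_square assms(3))
qed

section \<open>Circle-valued Sobolev maps\<close>

lemma W11_on_bounded_linear: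
  fixes g gd :: "real \<Rightarrow> complex" and l :: "complex \<Rightarrow> real"
  assumes l: "bounded_linear l" and gdi: "gd absolutely_integrable_on {a..b}"
    and geq: "\<And>t. t \<in> {a..b} \<Longrightarrow> g t = g a + integral {a..t} gd"
  shows "W11_on a b (\<lambda>t. l (g t)) (\<lambda>t. l (gd t))"
proof (rule W11_onI)
  show "(\<lambda>t. l (gd t)) absolutely_integrable_on {a..b}"
    using absolutely_integrable_linear[OF gdi l] by (simp add: o_def)
  fix t assume t: "t \<in> {a..b}"
  have "gd integrable_on {a..t}"
    using gdi t by (auto simp: absolutely_integrable_on_def intro: integrable_subinterval_real)
  then show "l (g t) = l (g a) + integral {a..t} (\<lambda>t. l (gd t))"
    using geq[OF t] integral_linear[of gd "{a..t}" l] l by (simp add: o_def linear_simps)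
qed

lemma W11_on_Re_cnj_deriv_zero:
  fixes g gd :: "real \<Rightarrow> complex"
  assumes "a \<le> b" and gdi: "gd absolutely_integrable_on {a..b}"
    and geq: "\<And>t. t \<in> {a..b} \<Longrightarrow> g t = g a + integral {a..t} gd"
    and g1: "\<And>t. t \<in> {a..b} \<Longrightarrow> norm (g t) = 1"
  shows "W11_on a b (\<lambda>t. 0) (\<lambda>t. Re (cnj (g t) * gd t))"
proof -
  have "W11_on a b (\<lambda>t. (1/2) * ((Re (g t))\<^sup>2 + (Im (g t))\<^sup>2))
     (\<lambda>t. (1/2) * (2 * Re (g t) * Re (gd t) + 2 * Im (g t) * Im (gd t)))"
    by (intro W11_on_cmult W11_on_add W11_on_power2 W11_on_bounded_linear[OF _ gdi geq]
        bounded_linear_Re bounded_linear_Im)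
  moreover note \<open>a \<le> b\<close>
  moreover have "(1/2) * ((Re (g t))\<^sup>2 + (Im (g t))\<^sup>2) = 1/2" if "t \<in> {a..b}" for t
    using g1[OF that] by (simp add: cmod_def)
  ultimately have "W11_on a b (\<lambda>t. 1/2) (\<lambda>t. Re (cnj (g t) * gd t))"
    by (rule W11_on_cong) auto
  from W11_on_diff[OF this W11_on_const[of a b "1/2"]] show ?thesis by simp
qed

lemma has_integral_continuous_mult_null:
  fixes K \<rho> :: "real \<Rightarrow> real"
  assumes \<rho>: "W11_on a b (\<lambda>t. 0) \<rho>" and K: "continuous_on {a..b} K"
  shows "((\<lambda>t. K t * \<rho> t) has_integral 0) {a..b}"
proof (cases "a \<le> b")
  case True
  let ?h = "\<lambda>t. K t * \<rho> t"
  have hI: "?h integrable_on {a..b}"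
    using absolutely_integrable_continuous_mult[OF K W11_on_absolutely_integrable[OF \<rho>]]
    by (simp add: absolutely_integrable_on_def)
  have \<rho>I: "\<rho> integrable_on {a..b}" using W11_on_integrable[OF \<rho>] .
  have ucK: "uniformly_continuous_on {a..b} K" by (intro compact_uniformly_continuous K) auto
  define E where "E t = integral {a..t} ?h" for t
  have "E b = E a"
  proof (rule locally_dominated_imp_constant[OF W11_on_abs_integrable[OF \<rho>]])
    fix e :: real assume "e > 0"
    then obtain \<eta> where "\<eta> > 0"
      and dK: "\<And>x y. x \<in> {a..b} \<Longrightarrow> y \<in> {a..b} \<Longrightarrow> \<bar>y - x\<bar> < \<eta> \<Longrightarrow> \<bar>K y - K x\<bar> < e"
      using ucK unfolding uniformly_continuous_on_def dist_real_def by metis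
    have "\<bar>E u - E s\<bar> \<le> e * integral {s..u} (\<lambda>t. \<bar>\<rho> t\<bar>)"
      if su: "a \<le> s" "s \<le> u" "u \<le> b" "u - s \<le> \<eta>/2" for s u
    proof -
      have hsu: "?h integrable_on {s..u}" and \<rho>su: "\<rho> integrable_on {s..u}"
        using hI \<rho>I su by (auto intro: integrable_subinterval_real)
      have "E u - E s = integral {s..u} ?h - K s * integral {s..u} \<rho>"
        using indefinite_integral_diff[OF hI, of E s u] W11_on_integral[OF \<rho>, of s u] su
        by (simp add: E_def)
      also have "\<dots> = integral {s..u} (\<lambda>r. ?h r - K s * \<rho> r)"
        using integral_diff[OF hsu integrable_on_mult_right[OF \<rho>su]] by simp
      also have "\<dots> = integral {s..u} (\<lambda>r. (K r - K s) * \<rho> r)"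
        by (simp add: left_diff_distrib)
      finally have Esu: "E u - E s = integral {s..u} (\<lambda>r. (K r - K s) * \<rho> r)" .
      have bnd: "\<bar>(K r - K s) * \<rho> r\<bar> \<le> e * \<bar>\<rho> r\<bar>" if "r \<in> {s..u}" for r
        using dK[of s r] that su \<open>\<eta> > 0\<close> by (auto simp: abs_mult intro!: mult_right_mono)
      have i1: "(\<lambda>r. (K r - K s) * \<rho> r) integrable_on {s..u}"
        using integrable_diff[OF hsu integrable_on_mult_right[OF \<rho>su]] by (simp add: left_diff_distrib)
      have i2: "(\<lambda>r. e * \<bar>\<rho> r\<bar>) integrable_on {s..u}"
        using W11_on_abs_integrable[OF \<rho>] su by (auto intro: integrable_subinterval_real integrable_on_mult_right)
      have "norm (integral {s..u} (\<lambda>r. (K r - K s) * \<rho> r)) \<le> integral {s..u} (\<lambda>r. e * \<bar>\<rho> r\<bar>)"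
        by (intro integral_norm_bound_integral i1 i2) (use bnd in simp)
      then show ?thesis unfolding Esu by simp
    qed
    then show "\<exists>\<eta>>0. \<forall>s u. a \<le> s \<longrightarrow> s \<le> u \<longrightarrow> u \<le> b \<longrightarrow> u - s \<le> \<eta> \<longrightarrow>
        \<bar>E u - E s\<bar> \<le> e * integral {s..u} (\<lambda>t. \<bar>\<rho> t\<bar>)"
      using \<open>\<eta> > 0\<close> by (intro exI[of _ "\<eta>/2"]) auto
  qed (use True in auto)
  then have "integral {a..b} ?h = 0" by (simp add: E_def)
  then show ?thesis using hI by (metis has_integral_integral)
qed simp

lemma abs_Im_Ln_approx:
  fixes z :: complex
  assumes "exp (\<i> * of_real \<theta>) = 1 + z" "\<bar>\<theta>\<bar> < pi" "norm z < 1/2"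
  shows "\<bar>\<theta> - Im z\<bar> \<le> 2 * (norm z)\<^sup>2"
proof -
  have "Ln (1 + z) = Ln (exp (\<i> * of_real \<theta>))"
    by (simp only: assms(1))
  also have "\<dots> = \<i> * of_real \<theta>"
    using assms(2) by (intro Ln_exp) auto
  finally have L: "Ln (1 + z) = \<i> * of_real \<theta>" .
  have "norm (Ln (1 + z) - z) \<le> (norm z)\<^sup>2 / (1 - norm z)"
    by (rule Ln_approx_linear) (use assms(3) in linarith)
  also have "\<dots> \<le> (norm z)\<^sup>2 / (1/2)"
    using assms(3) by (intro divide_left_mono) auto
  finally have "norm (\<i> * of_real \<theta> - z) \<le> 2 * (norm z)\<^sup>2"
    unfolding L by simp
  moreover have "\<bar>\<theta> - Im z\<bar> \<le> norm (\<i> * of_real \<theta> - z)"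
    using abs_Im_le_cmod[of "\<i> * of_real \<theta> - z"] by simp
  ultimately show ?thesis by linarith
qed

lemma continuous_unit_lift:
  fixes g :: "real \<Rightarrow> complex"
  assumes g: "continuous_on {a..b} g" and g1: "\<And>t. t \<in> {a..b} \<Longrightarrow> norm (g t) = 1"
  obtains \<psi> where "continuous_on {a..b} \<psi>" "\<And>t. t \<in> {a..b} \<Longrightarrow> g t = exp (\<i> * of_real (\<psi> t))"
proof -
  obtain \<Lambda> where "continuous_on {a..b} \<Lambda>" and g_exp: "\<And>t. t \<in> {a..b} \<Longrightarrow> g t = exp (\<Lambda> t)"
  proof (rule continuous_logarithm_on_contractible[OF g])
    show "contractible {a..b}" by (simp add: convex_imp_contractible)
    show "\<And>t. t \<in> {a..b} \<Longrightarrow> g t \<noteq> 0" using g1 by fastforce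
  qed blast
  moreover have "g t = exp (\<i> * of_real (Im (\<Lambda> t)))" if "t \<in> {a..b}" for t
  proof -
    have "Re (\<Lambda> t) = 0" using g1[OF that] g_exp[OF that] by (simp add: norm_exp_eq_Re)
    then have "\<Lambda> t = \<i> * of_real (Im (\<Lambda> t))" by (simp add: complex_eq_iff)
    then show ?thesis using g_exp[OF that] by simp
  qed
  ultimately show ?thesis
    using that[of "\<lambda>t. Im (\<Lambda> t)"] continuous_on_Im by blast
qed

lemma phase_increment_estimate:
  fixes g gd :: "real \<Rightarrow> complex"
  assumes gdi: "gd absolutely_integrable_on {s..x}"
    and DI: "(\<lambda>r. Im (cnj (g r) * gd r)) integrable_on {s..x}"
    and g_diff: "g x - g s = integral {s..x} gd" and g1: "norm (g s) = 1"
    and close: "\<And>r. r \<in> {s..x} \<Longrightarrow> norm (g r - g s) \<le> \<epsilon>" and "\<epsilon> < 1/2" and "s \<le> x"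
    and phase: "g s = exp (\<i> * of_real \<psi>\<^sub>s)" "g x = exp (\<i> * of_real \<psi>\<^sub>x)" "\<bar>\<psi>\<^sub>x - \<psi>\<^sub>s\<bar> < pi"
  shows "\<bar>(\<psi>\<^sub>x - \<psi>\<^sub>s) - integral {s..x} (\<lambda>r. Im (cnj (g r) * gd r))\<bar> \<le> 3 * \<epsilon> * integral {s..x} (\<lambda>r. norm (gd r))"
proof -
  let ?D = "\<lambda>r. Im (cnj (g r) * gd r)"
  define J where "J = integral {s..x} (\<lambda>r. norm (gd r))"
  have gI: "gd integrable_on {s..x}" and nI: "(\<lambda>r. norm (gd r)) integrable_on {s..x}"
    using gdi by (simp_all add: absolutely_integrable_on_def)
  define z where "z = cnj (g s) * (g x - g s)"
  have nz: "norm z = norm (g x - g s)" using g1 by (simp add: z_def norm_mult)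
  have "norm z \<le> J"
    unfolding nz g_diff J_def by (rule integral_norm_bound_integral[OF gI nI]) auto
  have "norm z \<le> \<epsilon>" using nz close[of x] \<open>s \<le> x\<close> by simp
  have "exp (\<i> * of_real (\<psi>\<^sub>x - \<psi>\<^sub>s)) = g x * cnj (g s)"
    unfolding phase by (simp add: exp_diff exp_cnj algebra_simps divide_inverse flip: exp_minus)
  also have "\<dots> = 1 + z"
    using complex_norm_square[of "g s"] g1 by (simp add: z_def algebra_simps)
  finally have "\<bar>(\<psi>\<^sub>x - \<psi>\<^sub>s) - Im z\<bar> \<le> 2 * (norm z * norm z)"
    using abs_Im_Ln_approx[of "\<psi>\<^sub>x - \<psi>\<^sub>s" z] phase(3) \<open>norm z \<le> \<epsilon>\<close> \<open>\<epsilon> < 1/2\<close>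
    by (simp add: power2_eq_square)
  also have "\<dots> \<le> 2 * (\<epsilon> * J)"
    using \<open>norm z \<le> \<epsilon>\<close> \<open>norm z \<le> J\<close> norm_ge_zero[of z]
    by (intro mult_left_mono mult_mono) linarith+
  finally have A1: "\<bar>(\<psi>\<^sub>x - \<psi>\<^sub>s) - Im z\<bar> \<le> 2 * \<epsilon> * J" by simp
  have I: "(\<lambda>r. Im (cnj (g s) * gd r)) integrable_on {s..x}"
    using integrable_linear[OF integrable_on_mult_right[OF gI, of "cnj (g s)"] bounded_linear_Im]
    by (simp add: o_def)
  have "Im z = integral {s..x} (\<lambda>r. Im (cnj (g s) * gd r))"
    using integral_linear[OF integrable_on_mult_right[OF gI, of "cnj (g s)"] bounded_linear_Im]
    by (simp add: z_def g_diff o_def)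
  then have "Im z - integral {s..x} ?D = integral {s..x} (\<lambda>r. Im (cnj (g s) * gd r) - ?D r)"
    using integral_diff[OF I DI] by simp
  also have "\<bar>\<dots>\<bar> \<le> integral {s..x} (\<lambda>r. \<epsilon> * norm (gd r))"
    unfolding real_norm_def[symmetric]
  proof (rule integral_norm_bound_integral)
    show "(\<lambda>r. Im (cnj (g s) * gd r) - ?D r) integrable_on {s..x}"
      by (rule integrable_diff[OF I DI])
    show "(\<lambda>r. \<epsilon> * norm (gd r)) integrable_on {s..x}"
      using integrable_on_mult_right[OF nI] by simp
    fix r assume r: "r \<in> {s..x}"
    have "\<bar>Im (cnj (g s) * gd r) - ?D r\<bar> = \<bar>Im ((cnj (g s) - cnj (g r)) * gd r)\<bar>"
      by (simp add: algebra_simps)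
    also have "\<dots> \<le> norm (g r - g s) * norm (gd r)"
      using abs_Im_le_cmod by (metis complex_cnj_diff complex_mod_cnj norm_mult norm_minus_commute)
    also have "\<dots> \<le> \<epsilon> * norm (gd r)"
      using close[OF r] by (intro mult_right_mono) auto
    finally show "norm (Im (cnj (g s) * gd r) - ?D r) \<le> \<epsilon> * norm (gd r)" by simp
  qed
  finally have A2: "\<bar>Im z - integral {s..x} ?D\<bar> \<le> \<epsilon> * J" by (simp add: J_def)
  show ?thesis using A1 A2 unfolding J_def by linarith
qed

lemma W11_unit_lift:
  fixes g gd :: "real \<Rightarrow> complex"
  assumes "a \<le> b" and gdi: "gd absolutely_integrable_on {a..b}"
    and geq: "\<And>t. t \<in> {a..b} \<Longrightarrow> g t = g a + integral {a..t} gd"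
    and g1: "\<And>t. t \<in> {a..b} \<Longrightarrow> norm (g t) = 1"
  obtains \<psi> where "W11_on a b \<psi> (\<lambda>t. Im (cnj (g t) * gd t))"
    "\<And>t. t \<in> {a..b} \<Longrightarrow> g t = exp (\<i> * of_real (\<psi> t))"
proof -
  let ?D = "\<lambda>t. Im (cnj (g t) * gd t)"
  have gdI: "gd integrable_on {a..b}" and ngI: "(\<lambda>t. norm (gd t)) integrable_on {a..b}"
    using gdi by (simp_all add: absolutely_integrable_on_def)
  have g: "continuous_on {a..b} g" by (rule continuous_on_indefinite_integral[OF gdI geq])
  obtain \<psi> where \<psi>: "continuous_on {a..b} \<psi>" and g_exp: "\<And>t. t \<in> {a..b} \<Longrightarrow> g t = exp (\<i> * of_real (\<psi> t))"
    using continuous_unit_lift[OF g g1] by blast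
  have "(\<lambda>t. Re (g t) * Im (gd t) - Im (g t) * Re (gd t)) absolutely_integrable_on {a..b}"
    by (intro set_integral_diff(1) absolutely_integrable_continuous_mult continuous_intros g
        W11_on_absolutely_integrable[OF W11_on_bounded_linear[OF _ gdi geq]]
        bounded_linear_Re bounded_linear_Im)
  then have Dabs: "?D absolutely_integrable_on {a..b}" by simp
  then have DI: "?D integrable_on {a..b}" by (simp add: absolutely_integrable_on_def)
  have ucg: "uniformly_continuous_on {a..b} g" by (intro compact_uniformly_continuous g) auto
  have uc\<psi>: "uniformly_continuous_on {a..b} \<psi>" by (intro compact_uniformly_continuous \<psi>) auto
  define E where "E x = \<psi> x - integral {a..x} ?D" for x
  have const: "E t = E a" if t: "t \<in> {a..b}" for t
  proof (rule locally_dominated_imp_constant[OF ngI _ t])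
    fix e :: real assume "e > 0"
    define \<epsilon> where "\<epsilon> = min (1/4) (e/3)"
    have "\<epsilon> > 0" using \<open>e > 0\<close> by (simp add: \<epsilon>_def)
    then obtain \<eta>1 where "\<eta>1 > 0"
      and d1: "\<And>x y. x \<in> {a..b} \<Longrightarrow> y \<in> {a..b} \<Longrightarrow> dist y x < \<eta>1 \<Longrightarrow> dist (g y) (g x) < \<epsilon>"
      using ucg unfolding uniformly_continuous_on_def by metis
    obtain \<eta>2 where "\<eta>2 > 0"
      and d2: "\<And>x y. x \<in> {a..b} \<Longrightarrow> y \<in> {a..b} \<Longrightarrow> dist y x < \<eta>2 \<Longrightarrow> dist (\<psi> y) (\<psi> x) < pi"
      using uc\<psi> pi_gt_zero unfolding uniformly_continuous_on_def by metis
    have "\<bar>E x - E s\<bar> \<le> e * integral {s..x} (\<lambda>r. norm (gd r))"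
      if sx: "a \<le> s" "s \<le> x" "x \<le> b" "x - s \<le> min \<eta>1 \<eta>2 / 2" for s x
    proof -
      have "E x - E s = (\<psi> x - \<psi> s) - integral {s..x} ?D"
        using indefinite_integral_diff[OF DI, of "\<lambda>x. integral {a..x} ?D" s x] sx
        by (simp add: E_def)
      also have "\<bar>\<dots>\<bar> \<le> 3 * \<epsilon> * integral {s..x} (\<lambda>r. norm (gd r))"
      proof (rule phase_increment_estimate)
        show "gd absolutely_integrable_on {s..x}" "?D integrable_on {s..x}"
          using gdi DI sx by (auto intro: absolutely_integrable_on_subinterval integrable_subinterval_real)
        show "g x - g s = integral {s..x} gd"
          by (rule indefinite_integral_diff[OF gdI geq]) (use sx in auto)
        show "norm (g r - g s) \<le> \<epsilon>" if "r \<in> {s..x}" for r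
          using d1[of s r] that sx \<open>\<eta>1 > 0\<close> \<open>\<eta>2 > 0\<close> by (auto simp: dist_norm dist_real_def)
        show "\<bar>\<psi> x - \<psi> s\<bar> < pi"
          using d2[of s x] sx \<open>\<eta>1 > 0\<close> \<open>\<eta>2 > 0\<close> by (auto simp: dist_real_def)
      qed (use sx g1 g_exp in \<open>auto simp: \<epsilon>_def\<close>)
      also have "\<dots> \<le> e * integral {s..x} (\<lambda>r. norm (gd r))"
        using ngI sx by (intro mult_right_mono integral_nonneg)
          (auto simp: \<epsilon>_def intro: integrable_subinterval_real)
      finally show ?thesis .
    qed
    then show "\<exists>\<eta>>0. \<forall>s x. a \<le> s \<longrightarrow> s \<le> x \<longrightarrow> x \<le> b \<longrightarrow> x - s \<le> \<eta> \<longrightarrow>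
        \<bar>E x - E s\<bar> \<le> e * integral {s..x} (\<lambda>r. norm (gd r))"
      using \<open>\<eta>1 > 0\<close> \<open>\<eta>2 > 0\<close> by (intro exI[of _ "min \<eta>1 \<eta>2 / 2"]) auto
  qed
  have "W11_on a b \<psi> ?D"
  proof (rule W11_onI[OF Dabs])
    fix t assume "t \<in> {a..b}"
    then show "\<psi> t = \<psi> a + integral {a..t} ?D"
      using const[of t] by (simp add: E_def)
  qed
  then show ?thesis using that g_exp by blast
qed

lemma circle_deg_lift:
  fixes g :: "real \<Rightarrow> complex" and \<psi> :: "real \<Rightarrow> real"
  assumes cont: "continuous_on {0..2*pi} \<psi>"
    and gpsi: "\<And>t. t \<in> {0..2*pi} \<Longrightarrow> g t = exp (\<i> * of_real (\<psi> t))"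
  shows "circle_deg g = of_real ((\<psi> (2*pi) - \<psi> 0) / (2*pi))"
proof -
  define p where "p u = \<i> * of_real (\<psi> (2*pi*u))" for u
  have eq: "(exp \<circ> p) u = g (2*pi*u)" if "u \<in> {0..1}" for u
    using gpsi[of "2*pi*u"] that by (simp add: p_def)
  have pp: "path p"
    unfolding path_def p_def
    by (intro continuous_intros continuous_on_compose2[OF cont]) auto
  have pe: "path (exp \<circ> p)"
    using pp by (simp add: path_def continuous_on_compose continuous_on_exp)
  have pg: "path (\<lambda>u. g (2*pi*u))"
    using pe unfolding path_def by (rule continuous_on_eq) (use eq in auto)
  have "winding_number (\<lambda>u. g (2*pi*u)) 0 = winding_number (exp \<circ> p) 0"
  proof (rule winding_number_nearby_paths_eq[OF pe pg])
    show "pathstart (\<lambda>u. g (2 * pi * u)) = pathstart (exp \<circ> p)"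
      "pathfinish (\<lambda>u. g (2 * pi * u)) = pathfinish (exp \<circ> p)"
      using eq[of 0] eq[of 1] by (simp_all add: pathstart_def pathfinish_def)
    fix u :: real assume "u \<in> {0..1}"
    then show "norm (g (2*pi*u) - (exp \<circ> p) u) < norm ((exp \<circ> p) u - 0)"
      using eq[of u] exp_not_eq_zero[of "p u"] by auto
  qed
  also have "\<dots> = (pathfinish p - pathstart p) / (2 * of_real pi * \<i>)"
    by (rule winding_number_compose_exp[OF pp])
  also have "\<dots> = of_real ((\<psi> (2*pi) - \<psi> 0) / (2*pi))"
    by (simp add: p_def pathfinish_def pathstart_def field_simps)
  finally show ?thesis unfolding circle_deg_def .
qed

lemma W11_circle_phase:
  assumes "W11_circle g gd" "circle_deg g = of_int d"
  obtains \<psi> where "W11_on 0 (2*pi) \<psi> (\<lambda>t. Im (cnj (g t) * gd t))"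
    "\<And>t. t \<in> {0..2*pi} \<Longrightarrow> g t = exp (\<i> * of_real (\<psi> t))"
    "\<psi> (2*pi) = \<psi> 0 + 2 * pi * of_int d"
proof -
  have gdi: "gd absolutely_integrable_on {0..2*pi}"
    and geq: "\<And>t. t \<in> {0..2*pi} \<Longrightarrow> g t = g 0 + integral {0..t} gd"
    and g1: "\<And>t. t \<in> {0..2*pi} \<Longrightarrow> norm (g t) = 1"
    using assms(1) unfolding W11_circle_def by blast+
  have "(0::real) \<le> 2*pi" by simp
  from W11_unit_lift[OF this gdi geq g1] obtain \<psi> where \<psi>: "W11_on 0 (2*pi) \<psi> (\<lambda>t. Im (cnj (g t) * gd t))"
    and gpsi: "\<And>t. t \<in> {0..2*pi} \<Longrightarrow> g t = exp (\<i> * of_real (\<psi> t))"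
    by blast
  have "of_real ((\<psi> (2*pi) - \<psi> 0) / (2*pi)) = (of_int d :: complex)"
    using circle_deg_lift[OF W11_on_continuous[OF \<psi>] gpsi] assms(2) by simp
  then have "(\<psi> (2*pi) - \<psi> 0) / (2*pi) = of_int d"
    by (metis of_real_eq_iff of_real_of_int_eq)
  then show ?thesis using that \<psi> gpsi by (simp add: field_simps)
qed

section \<open>Powers of the haversine\<close>

definition haversin :: "real \<Rightarrow> real" where
  "haversin z = (1 - cos z) / 2"

lemma haversin_nonneg: "0 \<le> haversin z"
  and haversin_le_one: "haversin z \<le> 1"
  unfolding haversin_def using cos_le_one[of z] cos_ge_minus_one[of z] by auto

lemma cos_eq_haversin: "cos z = 1 - 2 * haversin z"
  by (simp add: haversin_def field_simps)

lemma sin_power2_haversin: "(sin z)\<^sup>2 = 4 * haversin z * (1 - haversin z)"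
proof -
  have "sin z * sin z = 1 - cos z * cos z" using sin_cos_squared_add3[of z] by linarith
  then show ?thesis unfolding haversin_def
    by (simp add: field_simps power2_eq_square) (use sin_cos_squared_add3[of z] in linarith)
qed

lemma has_real_derivative_haversin: "(haversin has_real_derivative (sin z / 2)) (at z)"
  unfolding haversin_def by (auto intro!: derivative_eq_intros)

lemma continuous_on_haversin: "continuous_on S haversin"
  unfolding haversin_def[abs_def] by (intro continuous_intros) auto

lemma haversin_periodic: "haversin (z + 2 * pi * of_int j) = haversin z"
  unfolding haversin_def by (simp add: cos_add)

text \<open>\<open>hav_mean M = (2M choose M) / 4\<^sup>M\<close> is the mean value of \<open>haversin\<^sup>M\<close> over a period.\<close>

fun hav_mean :: "nat \<Rightarrow> real" where
  "hav_mean 0 = 1"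
| "hav_mean (Suc M) = (2 * real M + 1) / (2 * real M + 2) * hav_mean M"

lemma hav_mean_nonneg: "hav_mean M \<ge> 0"
  by (induction M) auto

lemma hav_mean_power2_le: "(hav_mean M)\<^sup>2 \<le> 1 / (2 * real M + 1)"
proof (induction M)
  case 0
  then show ?case by simp
next
  case (Suc M)
  have "(hav_mean (Suc M))\<^sup>2 = ((2 * real M + 1) / (2 * real M + 2))\<^sup>2 * (hav_mean M)\<^sup>2"
    by (simp add: field_simps power2_eq_square)
  also have "\<dots> \<le> ((2 * real M + 1) / (2 * real M + 2))\<^sup>2 * (1 / (2 * real M + 1))"
    by (intro mult_left_mono Suc.IH) auto
  also have "\<dots> = (2 * real M + 1) / (2 * real M + 2)\<^sup>2"
  proof -
    have "(a / b)\<^sup>2 * (1 / a) = a / b\<^sup>2" if "a > 0" "b > 0" for a b :: real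
      using that by (simp add: power2_eq_square field_simps)
    then show ?thesis by simp
  qed
  also have "\<dots> \<le> 1 / (2 * real (Suc M) + 1)"
  proof -
    have "(2 * real M + 1) * (2 * real M + 3) \<le> (2 * real M + 2)\<^sup>2"
      by (simp add: power2_eq_square algebra_simps)
    then show ?thesis by (simp add: field_simps)
  qed
  finally show ?case .
qed

lemma has_real_derivative_sin_mult_haversin_power:
  "((\<lambda>z. sin z * haversin z ^ M) has_real_derivative
     ((2 * real M + 1) * haversin z ^ M - (2 * real M + 2) * haversin z ^ Suc M)) (at z)"
proof -
  have d: "((\<lambda>z. sin z * haversin z ^ M) has_real_derivative
      (cos z * haversin z ^ M + sin z * (real M * haversin z ^ (M - 1) * (sin z / 2)))) (at z)"
    by (auto intro!: derivative_eq_intros has_real_derivative_haversin simp: algebra_simps)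
  have "sin z * (real M * haversin z ^ (M - 1) * (sin z / 2))
      = real M * haversin z ^ (M - 1) * ((sin z)\<^sup>2 / 2)"
    by (simp add: power2_eq_square)
  also have "\<dots> = real M * haversin z ^ (M - 1) * (2 * haversin z * (1 - haversin z))"
    by (simp add: sin_power2_haversin)
  also have "\<dots> = 2 * real M * haversin z ^ M * (1 - haversin z)"
    by (cases M) (auto simp: algebra_simps)
  finally have e: "sin z * (real M * haversin z ^ (M - 1) * (sin z / 2))
      = 2 * real M * haversin z ^ M * (1 - haversin z)" .
  show ?thesis using d unfolding e cos_eq_haversin by (simp add: algebra_simps)
qed

text \<open>The recursion comes from integrating \<open>haversin\<^sup>M\<^sup>+\<^sup>1\<close> by parts against \<open>sin z * haversin\<^sup>M z\<close>.\<close>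

fun hav_power_primitive :: "nat \<Rightarrow> real \<Rightarrow> real" where
  "hav_power_primitive 0 z = 0"
| "hav_power_primitive (Suc M) z =
     ((2 * real M + 1) * hav_power_primitive M z - sin z * haversin z ^ M) / (2 * real M + 2)"

lemma has_real_derivative_hav_power_primitive:
  "(hav_power_primitive M has_real_derivative (haversin z ^ M - hav_mean M)) (at z)"
proof (induction M arbitrary: z)
  case 0
  then show ?case by simp
next
  case (Suc M)
  have "((\<lambda>z. ((2 * real M + 1) * hav_power_primitive M z - sin z * haversin z ^ M) / (2 * real M + 2))
      has_real_derivative
      (((2 * real M + 1) * (haversin z ^ M - hav_mean M)
        - ((2 * real M + 1) * haversin z ^ M - (2 * real M + 2) * haversin z ^ Suc M)) / (2 * real M + 2))) (at z)"
    by (intro DERIV_cdivide DERIV_diff DERIV_cmult Suc.IH has_real_derivative_sin_mult_haversin_power)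
  moreover have "((2 * real M + 1) * (haversin z ^ M - hav_mean M)
        - ((2 * real M + 1) * haversin z ^ M - (2 * real M + 2) * haversin z ^ Suc M)) / (2 * real M + 2)
      = haversin z ^ Suc M - hav_mean (Suc M)"
    by (simp add: field_simps)
  ultimately show ?case by (simp add: fun_eq_iff)
qed

lemma hav_power_primitive_periodic:
  "hav_power_primitive M (z + 2 * pi * of_int j) = hav_power_primitive M z"
  by (induction M) (auto simp: haversin_periodic sin_add)

lemma one_minus_power_le: "0 \<le> w \<Longrightarrow> w \<le> (1::real) \<Longrightarrow> 1 - w ^ N \<le> real N * (1 - w)"
proof (induction N)
  case 0
  then show ?case by simp
next
  case (Suc N)
  have "1 - w ^ Suc N = (1 - w ^ N) + w ^ N * (1 - w)" by (simp add: algebra_simps)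
  also have "\<dots> \<le> real N * (1 - w) + 1 * (1 - w)"
    using Suc by (intro add_mono mult_right_mono) (auto simp: power_le_one)
  finally show ?case by (simp add: algebra_simps)
qed

definition hav_defect :: "nat \<Rightarrow> real \<Rightarrow> real" where
  "hav_defect N z = - 2 * haversin z + 2 * haversin z ^ Suc N"

definition hav_defect_deriv :: "nat \<Rightarrow> real \<Rightarrow> real" where
  "hav_defect_deriv N z = (- 2 + 2 * real (Suc N) * haversin z ^ N) * (sin z / 2)"

lemma has_real_derivative_hav_defect:
  "(hav_defect N has_real_derivative hav_defect_deriv N z) (at z)"
proof -
  have "((\<lambda>z. haversin z ^ Suc N) has_real_derivative (real (Suc N) * (sin z / 2 * haversin z ^ N))) (at z)"
    using DERIV_power[OF has_real_derivative_haversin[of z], of "Suc N"] by simp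
  then have "((\<lambda>z. - 2 * haversin z + 2 * haversin z ^ Suc N) has_real_derivative
      (- 2 * (sin z / 2) + 2 * (real (Suc N) * (sin z / 2 * haversin z ^ N)))) (at z)"
    by (intro DERIV_add DERIV_cmult has_real_derivative_haversin)
  moreover have "- 2 * (sin z / 2) + 2 * (real (Suc N) * (sin z / 2 * haversin z ^ N)) = hav_defect_deriv N z"
    by (simp add: hav_defect_deriv_def algebra_simps)
  ultimately show ?thesis
    unfolding hav_defect_def[abs_def] by simp
qed

lemma continuous_on_hav_defect_deriv: "continuous_on S (hav_defect_deriv N)"
  unfolding hav_defect_deriv_def[abs_def] by (intro continuous_intros continuous_on_haversin) auto

lemma hav_defect_ge: "- hav_defect N z \<le> real N * (sin z)\<^sup>2 / 2"
proof -
  have "- hav_defect N z = 2 * haversin z * (1 - haversin z ^ N)"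
    unfolding hav_defect_def by (simp add: algebra_simps)
  also have "\<dots> \<le> 2 * haversin z * (real N * (1 - haversin z))"
    using haversin_nonneg[of z] haversin_le_one[of z] by (intro mult_left_mono one_minus_power_le) auto
  also have "\<dots> = real N * (sin z)\<^sup>2 / 2" by (simp add: sin_power2_haversin)
  finally show ?thesis .
qed

lemma abs_hav_defect_deriv_le: "\<bar>hav_defect_deriv N z\<bar> \<le> real N + 1"
proof -
  have "0 \<le> haversin z ^ N" "haversin z ^ N \<le> 1"
    using haversin_nonneg[of z] haversin_le_one[of z] by (auto simp: power_le_one)
  then have "0 \<le> real (Suc N) * haversin z ^ N" "real (Suc N) * haversin z ^ N \<le> real N + 1"
    using mult_left_le[of "haversin z ^ N" "real N + 1"] by (auto simp: add.commute)
  moreover have "\<bar>- 2 + 2 * x\<bar> \<le> 2 * (real N + 1)" if "0 \<le> x" "x \<le> real N + 1" for x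
    using that by (auto simp: abs_le_iff)
  ultimately have "\<bar>- 2 + 2 * (real (Suc N) * haversin z ^ N)\<bar> \<le> 2 * (real N + 1)"
    by blast
  then have "\<bar>- 2 + 2 * real (Suc N) * haversin z ^ N\<bar> \<le> 2 * (real N + 1)"
    by (simp only: mult.assoc)
  moreover have "\<bar>sin z / 2\<bar> \<le> 1/2" using abs_sin_le_one[of z] by simp
  ultimately have "\<bar>hav_defect_deriv N z\<bar> \<le> 2 * (real N + 1) * (1/2)"
    unfolding hav_defect_deriv_def abs_mult by (intro mult_mono) auto
  then show ?thesis by simp
qed

section \<open>The zigzag map\<close>

definition zigzag_slope :: "real \<Rightarrow> real \<Rightarrow> real \<Rightarrow> real \<Rightarrow> real" where
  "zigzag_slope L h p t = (if t - h * of_int \<lfloor>t / h\<rfloor> < p * h then L else - L)"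

definition zigzag :: "real \<Rightarrow> real \<Rightarrow> real \<Rightarrow> real \<Rightarrow> real" where
  "zigzag L h p t = integral {0..t} (zigzag_slope L h p)"

definition zigzag_map :: "real \<Rightarrow> real \<Rightarrow> real \<Rightarrow> real \<Rightarrow> complex" where
  "zigzag_map L h p t = exp (\<i> * of_real (zigzag L h p t))"

definition zigzag_map_deriv :: "real \<Rightarrow> real \<Rightarrow> real \<Rightarrow> real \<Rightarrow> complex" where
  "zigzag_map_deriv L h p t = \<i> * of_real (zigzag_slope L h p t) * zigzag_map L h p t"

lemma zigzag_slope_measurable: "zigzag_slope L h p \<in> borel_measurable (lebesgue_on S)"
proof -
  have "zigzag_slope L h p \<in> borel_measurable borel" unfolding zigzag_slope_def by measurable
  then have "zigzag_slope L h p \<in> lborel \<rightarrow>\<^sub>M borel" by (simp only: measurable_lborel2)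
  then have "zigzag_slope L h p \<in> borel_measurable lebesgue" by (rule measurable_completion)
  then show ?thesis by (rule measurable_restrict_space1)
qed

lemma absolutely_integrable_zigzag_slope: "zigzag_slope L h p absolutely_integrable_on {a..b}"
proof (rule measurable_bounded_by_integrable_imp_absolutely_integrable[where g="\<lambda>_. \<bar>L\<bar>"])
  show "zigzag_slope L h p \<in> borel_measurable (lebesgue_on {a..b})" by (rule zigzag_slope_measurable)
  show "{a..b} \<in> sets lebesgue" by simp
  show "(\<lambda>_. \<bar>L\<bar>) integrable_on {a..b}" by (rule integrable_continuous_real) (auto intro: continuous_intros)
  show "\<And>x. x \<in> {a..b} \<Longrightarrow> norm (zigzag_slope L h p x) \<le> \<bar>L\<bar>" by (simp add: zigzag_slope_def)
qed

lemma zigzag_slope_up: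
  assumes "h > 0" "p < 1" "real_of_int j * h \<le> t" "t < real_of_int j * h + p * h"
  shows "zigzag_slope L h p t = L"
proof -
  have "p * h < h" using assms by simp
  then have "t < real_of_int j * h + h" using assms by linarith
  then have "real_of_int j \<le> t / h" "t / h < real_of_int j + 1"
    using assms by (auto simp: field_simps)
  then have "\<lfloor>t / h\<rfloor> = j" by (simp add: floor_eq_iff)
  then show ?thesis using assms unfolding zigzag_slope_def by (simp add: algebra_simps)
qed

lemma zigzag_slope_down:
  assumes "h > 0" "real_of_int j * h + p * h \<le> t" "t < real_of_int j * h + h" "0 \<le> p"
  shows "zigzag_slope L h p t = - L"
proof -
  have "0 \<le> p * h" using assms by simp
  then have "real_of_int j * h \<le> t" using assms by linarith
  then have "real_of_int j \<le> t / h" "t / h < real_of_int j + 1"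
    using assms by (auto simp: field_simps)
  then have "\<lfloor>t / h\<rfloor> = j" by (simp add: floor_eq_iff)
  then show ?thesis using assms unfolding zigzag_slope_def by (simp add: algebra_simps)
qed

lemma has_integral_cells:
  fixes F :: "real \<Rightarrow> real"
  assumes h: "h > 0" and P: "\<And>j. j < n \<Longrightarrow> (F has_integral v) {real j * h .. real j * h + h}"
  shows "(F has_integral (real n * v)) {0 .. real n * h}"
  using P
proof (induction n)
  case 0
  then show ?case by (simp add: has_integral_refl)
next
  case (Suc n)
  have A: "(F has_integral (real n * v)) {0 .. real n * h}" using Suc by auto
  have B: "(F has_integral v) {real n * h .. real n * h + h}" using Suc.prems by auto
  have "(F has_integral (real n * v + v)) {0 .. real n * h + h}"
    by (rule has_integral_combine[OF _ _ A B]) (use h in auto)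
  then show ?case by (simp add: algebra_simps)
qed

lemma zigzag_slope_has_integral_cell:
  assumes h: "h > 0" and p: "0 \<le> p" "p < 1"
  shows "(zigzag_slope L h p has_integral (h * (L * (2 * p - 1)))) {real j * h .. real j * h + h}"
proof -
  let ?c = "real j * h + p * h"
  have up: "(zigzag_slope L h p has_integral (L * (p * h))) {real j * h .. ?c}"
  proof (rule has_integral_spike_finite[where S="{?c}"])
    show "((\<lambda>_. L) has_integral (L * (p * h))) {real j * h .. ?c}"
      using has_integral_const_real[of L "real j * h" ?c] h p by (simp add: mult_ac)
    fix x assume "x \<in> {real j * h .. ?c} - {?c}"
    then show "zigzag_slope L h p x = L" using zigzag_slope_up[of h p "int j" x] h p
      by auto
  qed auto
  have down: "(zigzag_slope L h p has_integral (- L * ((1 - p) * h))) {?c .. real j * h + h}"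
  proof (rule has_integral_spike_finite[where S="{real j * h + h}"])
    show "((\<lambda>_. - L) has_integral (- L * ((1 - p) * h))) {?c .. real j * h + h}"
      using has_integral_const_real[of "- L" ?c "real j * h + h"] h p by (simp add: algebra_simps mult_ac)
    fix x assume "x \<in> {?c .. real j * h + h} - {real j * h + h}"
    then show "zigzag_slope L h p x = - L" using zigzag_slope_down[of h "int j" p x] h p by auto
  qed auto
  have "(zigzag_slope L h p has_integral (L * (p * h) + - L * ((1 - p) * h))) {real j * h .. real j * h + h}"
    by (rule has_integral_combine[OF _ _ up down]) (use h p in \<open>auto intro: mult_nonneg_nonneg mult_left_le_one_le\<close>)
  then show ?thesis by (simp add: algebra_simps)
qed

lemma has_integral_zigzag_slope_mult_cell:
  fixes Z :: "real \<Rightarrow> real"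
  assumes h: "h > 0" and p: "0 \<le> p" "p < 1"
    and Z0: "\<And>s t. real j * h \<le> s \<Longrightarrow> s \<le> t \<Longrightarrow> t \<le> real j * h + h \<Longrightarrow> (Z has_integral 0) {s..t}"
  shows "((\<lambda>t. zigzag_slope L h p t * Z t) has_integral 0) {real j * h .. real j * h + h}"
proof -
  let ?c = "real j * h + p * h"
  have c: "real j * h \<le> ?c" "?c \<le> real j * h + h" using h p by (auto intro: mult_left_le_one_le)
  have up: "((\<lambda>t. zigzag_slope L h p t * Z t) has_integral 0) {real j * h .. ?c}"
  proof (rule has_integral_spike_finite[where S="{?c}"])
    show "((\<lambda>t. L * Z t) has_integral 0) {real j * h .. ?c}"
      using has_integral_mult_right[OF Z0[of "real j * h" ?c], of L] c by simp
    fix x assume "x \<in> {real j * h .. ?c} - {?c}"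
    then show "zigzag_slope L h p x * Z x = L * Z x"
      using zigzag_slope_up[of h p "int j" x] h p by auto
  qed auto
  have down: "((\<lambda>t. zigzag_slope L h p t * Z t) has_integral 0) {?c .. real j * h + h}"
  proof (rule has_integral_spike_finite[where S="{real j * h + h}"])
    show "((\<lambda>t. - L * Z t) has_integral 0) {?c .. real j * h + h}"
      using has_integral_mult_right[OF Z0[of ?c "real j * h + h"], of "- L"] c by simp
    fix x assume "x \<in> {?c .. real j * h + h} - {real j * h + h}"
    then show "zigzag_slope L h p x * Z x = - L * Z x"
      using zigzag_slope_down[of h "int j" p x] h p by auto
  qed auto
  show ?thesis using has_integral_combine[OF c up down] by simp
qed

lemma W11_on_zigzag: "W11_on 0 b (zigzag L h p) (zigzag_slope L h p)"
  by (rule W11_onI[OF absolutely_integrable_zigzag_slope]) (simp add: zigzag_def)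

lemma zigzag_grid:
  assumes h: "h > 0" and p: "0 \<le> p" "p < 1"
  shows "zigzag L h p (real j * h) = real j * (h * (L * (2 * p - 1)))"
proof -
  have "(zigzag_slope L h p has_integral (real j * (h * (L * (2 * p - 1))))) {0 .. real j * h}"
    by (rule has_integral_cells[OF h zigzag_slope_has_integral_cell[OF h p]])
  then show ?thesis unfolding zigzag_def by (rule integral_unique)
qed

lemma zigzag_near_linear:
  assumes h: "h > 0" and p: "0 \<le> p" "p < 1" and D: "L * (2 * p - 1) = D" and "0 \<le> t"
  shows "\<bar>zigzag L h p t - D * t\<bar> \<le> (\<bar>L\<bar> + \<bar>D\<bar>) * h"
proof -
  define j where "j = nat \<lfloor>t / h\<rfloor>"
  have t0: "0 \<le> t / h" using \<open>0 \<le> t\<close> h by auto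
  have jle: "real j * h \<le> t"
  proof -
    have "real j = of_int \<lfloor>t / h\<rfloor>" unfolding j_def using t0 by simp
    also have "\<dots> \<le> t / h" by simp
    finally show ?thesis using h by (simp add: field_simps)
  qed
  have jgt: "t < real j * h + h"
  proof -
    have "t / h < of_int \<lfloor>t / h\<rfloor> + 1" by linarith
    also have "of_int \<lfloor>t / h\<rfloor> = real j" unfolding j_def using t0 by simp
    finally show ?thesis using h by (simp add: field_simps)
  qed
  have "zigzag L h p t - zigzag L h p (real j * h) = integral {real j * h .. t} (zigzag_slope L h p)"
    using W11_on_integral[OF W11_on_zigzag[of t L h p], of "real j * h" t] jle h by auto
  moreover have "\<bar>integral {real j * h .. t} (zigzag_slope L h p)\<bar> \<le> \<bar>L\<bar> * (t - real j * h)"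
  proof -
    have "zigzag_slope L h p integrable_on {real j * h .. t}"
      using absolutely_integrable_zigzag_slope by (simp add: absolutely_integrable_on_def)
    then have "norm (integral {real j * h .. t} (zigzag_slope L h p)) \<le> integral {real j * h .. t} (\<lambda>_. \<bar>L\<bar>)"
      by (rule integral_norm_bound_integral) (auto simp: zigzag_slope_def)
    then show ?thesis using jle by (simp add: mult.commute)
  qed
  moreover have "zigzag L h p (real j * h) = real j * (h * D)"
    using zigzag_grid[OF h p, of L j] D by simp
  ultimately have "\<bar>zigzag L h p t - real j * (h * D)\<bar> \<le> \<bar>L\<bar> * (t - real j * h)" by simp
  moreover have "\<bar>D * t - real j * (h * D)\<bar> \<le> \<bar>D\<bar> * h"
  proof -
    have "\<bar>D * t - real j * (h * D)\<bar> = \<bar>D\<bar> * \<bar>t - real j * h\<bar>" by (simp add: algebra_simps abs_mult flip: abs_mult)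
    also have "\<dots> \<le> \<bar>D\<bar> * h" using jle jgt by (intro mult_left_mono) auto
    finally show ?thesis .
  qed
  moreover have "\<bar>L\<bar> * (t - real j * h) \<le> \<bar>L\<bar> * h" using jle jgt by (intro mult_left_mono) auto
  ultimately show ?thesis by (simp add: algebra_simps abs_le_iff) linarith
qed

lemma exp_i_of_real: "exp (\<i> * of_real x) = of_real (cos x) + \<i> * of_real (sin x)"
  by (subst cis_conv_exp[symmetric]) (simp add: complex_eq_iff)

lemma W11_on_exp_i:
  assumes \<phi>: "W11_on a b \<phi> \<phi>'"
  shows "(\<lambda>t. \<i> * of_real (\<phi>' t) * exp (\<i> * of_real (\<phi> t))) absolutely_integrable_on {a..b}"
    and "t \<in> {a..b} \<Longrightarrow> exp (\<i> * of_real (\<phi> t))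
           = exp (\<i> * of_real (\<phi> a)) + integral {a..t} (\<lambda>t. \<i> * of_real (\<phi>' t) * exp (\<i> * of_real (\<phi> t)))"
proof -
  let ?A = "\<lambda>t. - sin (\<phi> t) * \<phi>' t"
  let ?B = "\<lambda>t. cos (\<phi> t) * \<phi>' t"
  have A: "W11_on a b (\<lambda>t. cos (\<phi> t)) ?A"
    by (rule W11_on_chain[OF \<phi>, of cos "\<lambda>x. - sin x"]) (auto intro!: derivative_eq_intros continuous_intros)
  have B: "W11_on a b (\<lambda>t. sin (\<phi> t)) ?B"
    by (rule W11_on_chain[OF \<phi>, of sin cos]) (auto intro!: derivative_eq_intros continuous_intros)
  have deriv_eq: "(\<lambda>t. \<i> * of_real (\<phi>' t) * exp (\<i> * of_real (\<phi> t))) = (\<lambda>t. of_real (?A t) + \<i> * of_real (?B t))"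
    by (simp add: fun_eq_iff exp_i_of_real algebra_simps)
  have "(\<lambda>t. of_real (?A t) :: complex) absolutely_integrable_on {a..b}"
    and "(\<lambda>t. of_real (?B t) :: complex) absolutely_integrable_on {a..b}"
    using absolutely_integrable_linear[OF W11_on_absolutely_integrable[OF A] bounded_linear_of_real]
      absolutely_integrable_linear[OF W11_on_absolutely_integrable[OF B] bounded_linear_of_real]
    by (simp_all add: o_def)
  then show "(\<lambda>t. \<i> * of_real (\<phi>' t) * exp (\<i> * of_real (\<phi> t))) absolutely_integrable_on {a..b}"
    unfolding deriv_eq by (intro set_integral_add(1) set_integrable_mult_right)
  assume t: "t \<in> {a..b}"
  have "(?A has_integral (cos (\<phi> t) - cos (\<phi> a))) {a..t}"
    and "(?B has_integral (sin (\<phi> t) - sin (\<phi> a))) {a..t}"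
    using W11_on_has_integral[OF W11_on_subinterval[OF A, of a t]]
      W11_on_has_integral[OF W11_on_subinterval[OF B, of a t]] t by auto
  then have "((\<lambda>t. of_real (?A t) + \<i> * of_real (?B t)) has_integral
      (of_real (cos (\<phi> t) - cos (\<phi> a)) + \<i> * of_real (sin (\<phi> t) - sin (\<phi> a)))) {a..t}"
    by (intro has_integral_add has_integral_of_real has_integral_mult_right)
  then show "exp (\<i> * of_real (\<phi> t))
      = exp (\<i> * of_real (\<phi> a)) + integral {a..t} (\<lambda>t. \<i> * of_real (\<phi>' t) * exp (\<i> * of_real (\<phi> t)))"
    unfolding deriv_eq by (simp add: integral_unique exp_i_of_real algebra_simps)
qed

lemma zigzag_period:
  assumes h: "h > 0" and p: "0 \<le> p" "p < 1" and n: "real n * h = 2 * pi"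
    and D: "L * (2 * p - 1) = D"
  shows "zigzag L h p (2 * pi) = 2 * pi * D"
proof -
  have "zigzag L h p (real n * h) = (real n * h) * D"
    using zigzag_grid[OF h p, of L n] D by (simp add: mult.assoc)
  then show ?thesis by (simp only: n)
qed

lemma zigzag_map_W11:
  assumes h: "h > 0" and p: "0 \<le> p" "p < 1" and n: "real n * h = 2 * pi"
    and D: "L * (2 * p - 1) = of_int d"
  shows "W11_circle (zigzag_map L h p) (zigzag_map_deriv L h p)"
    and "circle_deg (zigzag_map L h p) = of_int d"
proof -
  have zigzag0: "zigzag L h p 0 = 0" by (simp add: zigzag_def)
  have zigzag2pi: "zigzag L h p (2 * pi) = 2 * pi * of_int d"
    by (rule zigzag_period[OF h p n D])
  have deriv_eq: "zigzag_map_deriv L h p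
      = (\<lambda>t. \<i> * of_real (zigzag_slope L h p t) * exp (\<i> * of_real (zigzag L h p t)))"
    by (simp add: fun_eq_iff zigzag_map_deriv_def zigzag_map_def)
  note W11 = W11_on_exp_i[OF W11_on_zigzag[of "2 * pi" L h p], folded deriv_eq]
  show "W11_circle (zigzag_map L h p) (zigzag_map_deriv L h p)"
    unfolding W11_circle_def
  proof (intro conjI ballI)
    show "zigzag_map_deriv L h p absolutely_integrable_on {0..2 * pi}"
      by (rule W11(1))
    show "zigzag_map L h p t = zigzag_map L h p 0 + integral {0..t} (zigzag_map_deriv L h p)"
      if "t \<in> {0..2 * pi}" for t
      using W11(2)[OF that] by (simp add: zigzag_map_def)
    have "exp (\<i> * of_real (zigzag L h p (2 * pi))) = exp ((2 * of_int d * pi) * \<i>)"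
      unfolding zigzag2pi by (simp add: algebra_simps)
    also have "\<dots> = 1" by (rule exp_integer_2pi) simp
    finally show "zigzag_map L h p (2 * pi) = zigzag_map L h p 0"
      by (simp add: zigzag_map_def zigzag0)
    show "norm (zigzag_map L h p t) = 1" for t
      by (simp add: zigzag_map_def)
  qed
  have "circle_deg (zigzag_map L h p) = of_real ((zigzag L h p (2*pi) - zigzag L h p 0) / (2*pi))"
    by (rule circle_deg_lift[OF W11_on_continuous[OF W11_on_zigzag]]) (simp add: zigzag_map_def)
  then show "circle_deg (zigzag_map L h p) = of_int d"
    unfolding zigzag2pi zigzag0 by simp
qed

section \<open>The calibration\<close>

text \<open>For \<open>Z = \<i> a f - gd\<close> the left-hand side is \<open>Re (cnj W * Z)\<close> with
  \<open>W = (1-r)(P \<i> g + Q \<i> f) + r s g\<close>, a vector of norm at most 1.\<close>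

lemma calibration_form_le_norm:
  fixes f g gd :: complex and a P Q r s :: real
  assumes f1: "norm f = 1" and g1: "norm g = 1"
    and "0 \<le> P" "0 \<le> Q" "P + Q = 1" "0 \<le> r" "r \<le> 1" "\<bar>s\<bar> \<le> 1"
  shows "(1 - r) * (P * (Re (cnj f * g) * a - Im (cnj g * gd)) + Q * (a - Im (cnj f * gd)))
           + r * s * (Im (cnj f * g) * a - Re (cnj g * gd))
         \<le> norm (\<i> * of_real a * f - gd)"
proof -
  define Z where "Z = \<i> * of_real a * f - gd"
  define W where "W = of_real ((1-r)*P) * (\<i> * g) + of_real ((1-r)*Q) * (\<i> * f) + of_real (r * s) * g"
  have "norm W \<le> norm (of_real ((1-r)*P) * (\<i> * g)) + norm (of_real ((1-r)*Q) * (\<i> * f))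
      + norm (of_real (r * s) * g)"
    unfolding W_def by (meson norm_triangle_le norm_triangle_ineq add_mono order_refl)
  also have "\<dots> = (1-r)*P + (1-r)*Q + r * \<bar>s\<bar>"
    using assms by (simp only: norm_mult norm_of_real norm_ii) (simp add: abs_mult)
  also have "\<dots> \<le> (1-r) + r"
    using assms by (metis add.commute distrib_left mult.right_neutral mult_left_mono add_left_mono)
  finally have nW: "norm W \<le> 1" by simp
  have "(Re f)\<^sup>2 + (Im f)\<^sup>2 = 1" "(Re g)\<^sup>2 + (Im g)\<^sup>2 = 1"
    using f1 g1 by (simp_all add: cmod_def)
  then have ff: "Im f * Im f = 1 - Re f * Re f" and gg: "Im g * Im g = 1 - Re g * Re g"
    by (simp_all add: power2_eq_square)
  have "Re (cnj W * Z) = (1 - r) * (P * (Re (cnj f * g) * a - Im (cnj g * gd)) + Q * (a - Im (cnj f * gd)))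
      + r * s * (Im (cnj f * g) * a - Re (cnj g * gd))"
    unfolding W_def Z_def by (simp add: algebra_simps ff gg)
  moreover have "Re (cnj W * Z) \<le> norm W * norm Z"
    by (metis complex_Re_le_cmod norm_mult complex_mod_cnj)
  moreover have "norm W * norm Z \<le> norm Z"
    using nW by (simp add: mult_left_le_one_le)
  ultimately show ?thesis unfolding Z_def by linarith
qed

lemma Im_cnj_mult_unit:
  fixes f g gd :: complex
  assumes "norm g = 1"
  shows "Im (cnj f * gd) = Im (cnj f * g) * Re (cnj g * gd) + Re (cnj f * g) * Im (cnj g * gd)"
proof -
  have "Im (cnj f * g) * Re (cnj g * gd) + Re (cnj f * g) * Im (cnj g * gd)
      = (Re f * Im gd - Im f * Re gd) * ((Re g)\<^sup>2 + (Im g)\<^sup>2)"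
    by (simp add: algebra_simps power2_eq_square)
  then show ?thesis using assms by (simp add: cmod_def)
qed

text \<open>The arguments are the weight \<open>r\<close>, the exponent \<open>N\<close>, the slope bound \<open>L\<close>, the degree
  \<open>d\<close>, the phase difference \<open>\<theta> = \<psi> - \<phi>\<close> and its derivative, the zigzag slope \<open>\<phi>'\<close>,
  and \<open>\<rho> = Re (cnj g * g')\<close>.\<close>

definition calibration :: "real \<Rightarrow> nat \<Rightarrow> real \<Rightarrow> real \<Rightarrow> real \<Rightarrow> real \<Rightarrow> real \<Rightarrow> real \<Rightarrow> real" where
  "calibration r N L d \<theta> \<theta>' \<phi>' \<rho> =
     (1 - r) * (- (1 - haversin \<theta> ^ Suc N) * \<theta>') + (1 - r) * hav_defect N \<theta> * (\<phi>' - d)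
     - ((1 - r) * (haversin \<theta> ^ N / 2) + r * \<phi>' / L) * sin \<theta> * \<rho>"

lemma calibration_le_norm:
  fixes f g gd :: complex and \<theta> a L r d :: real and N :: nat
  assumes f1: "norm f = 1" and g1: "norm g = 1"
    and x: "Re (cnj f * g) = cos \<theta>" and y: "Im (cnj f * g) = sin \<theta>"
    and L: "\<bar>a\<bar> = L" "L > 0" and r: "0 \<le> r" "r \<le> 1" and rL: "(1 - r) * d * real N / 2 \<le> r * L"
    and d: "d \<ge> 0"
  shows "calibration r N L d \<theta> (Im (cnj g * gd) - a) a (Re (cnj g * gd)) \<le> norm (\<i> * of_real a * f - gd)"
proof -
  define w where "w = haversin \<theta>"
  have wN: "0 \<le> w ^ N" "w ^ N \<le> 1"
    using haversin_nonneg[of \<theta>] haversin_le_one[of \<theta>] by (auto simp: w_def power_le_one)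
  define s where "s = sin \<theta> * a / L"
  have s1: "\<bar>s\<bar> \<le> 1"
    using L abs_sin_le_one[of \<theta>] by (simp add: s_def abs_mult)
  have "(1 - r) * ((1 - w ^ N / 2) * (Re (cnj f * g) * a - Im (cnj g * gd)) + (w ^ N / 2) * (a - Im (cnj f * gd)))
          + r * s * (Im (cnj f * g) * a - Re (cnj g * gd))
        \<le> norm (\<i> * of_real a * f - gd)"
    by (rule calibration_form_le_norm[OF f1 g1]) (use wN r s1 in auto)
  moreover have "r * s * (Im (cnj f * g) * a - Re (cnj g * gd))
      = r * L * (sin \<theta>)\<^sup>2 - r * a / L * sin \<theta> * Re (cnj g * gd)"
  proof -
    have "a * a = L * L" using L by (metis abs_mult_self_eq)
    then have "r * s * (sin \<theta> * a) = r * L * (sin \<theta>)\<^sup>2"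
      using L by (simp add: s_def power2_eq_square field_simps)
    then show ?thesis unfolding y by (simp add: s_def algebra_simps)
  qed
  moreover have "(1 - r) * ((1 - w ^ N / 2) * (Re (cnj f * g) * a - Im (cnj g * gd)) + (w ^ N / 2) * (a - Im (cnj f * gd)))
      = (1 - r) * (- (1 - w ^ Suc N) * (Im (cnj g * gd) - a)) + (1 - r) * hav_defect N \<theta> * a
        - (1 - r) * (w ^ N / 2) * sin \<theta> * Re (cnj g * gd)"
    unfolding x Im_cnj_mult_unit[OF g1, of f gd] y hav_defect_def cos_eq_haversin w_def
    by (simp add: field_simps)
  ultimately have "(1 - r) * ((1 - w ^ N / 2) * (Re (cnj f * g) * a - Im (cnj g * gd)) + (w ^ N / 2) * (a - Im (cnj f * gd)))
          + r * s * (Im (cnj f * g) * a - Re (cnj g * gd))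
        \<le> norm (\<i> * of_real a * f - gd)"
    and "(1 - r) * ((1 - w ^ N / 2) * (Re (cnj f * g) * a - Im (cnj g * gd)) + (w ^ N / 2) * (a - Im (cnj f * gd)))
          + r * s * (Im (cnj f * g) * a - Re (cnj g * gd))
      = calibration r N L d \<theta> (Im (cnj g * gd) - a) a (Re (cnj g * gd))
        + ((1 - r) * d * hav_defect N \<theta> + r * L * (sin \<theta>)\<^sup>2)"
    by (simp_all add: calibration_def w_def algebra_simps)
  moreover have "0 \<le> (1 - r) * d * hav_defect N \<theta> + r * L * (sin \<theta>)\<^sup>2"
  proof -
    have "(1 - r) * d * (- hav_defect N \<theta>) \<le> (1 - r) * d * (real N * (sin \<theta>)\<^sup>2 / 2)"
      using hav_defect_ge[of N \<theta>] r d by (intro mult_left_mono) auto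
    also have "\<dots> = ((1 - r) * d * real N / 2) * (sin \<theta>)\<^sup>2" by simp
    also have "\<dots> \<le> r * L * (sin \<theta>)\<^sup>2" using rL by (intro mult_right_mono) auto
    finally show ?thesis by simp
  qed
  ultimately show ?thesis by linarith
qed

lemma calibration_le_norm_exp:
  fixes w :: complex
  assumes "\<bar>a\<bar> = L" "L > 0" "0 \<le> r" "r \<le> 1" "(1 - r) * d * real N / 2 \<le> r * L" "d \<ge> 0"
  shows "calibration r N L d (\<psi> - \<phi>) (Im (cnj (exp (\<i> * of_real \<psi>)) * w) - a) a
           (Re (cnj (exp (\<i> * of_real \<psi>)) * w))
         \<le> norm (\<i> * of_real a * exp (\<i> * of_real \<phi>) - w)"
proof (rule calibration_le_norm)
  show "Re (cnj (exp (\<i> * of_real \<phi>)) * exp (\<i> * of_real \<psi>)) = cos (\<psi> - \<phi>)"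
    and "Im (cnj (exp (\<i> * of_real \<phi>)) * exp (\<i> * of_real \<psi>)) = sin (\<psi> - \<phi>)"
    by (simp_all add: exp_i_of_real cos_diff sin_diff algebra_simps)
qed (use assms in auto)

lemma has_integral_one_minus_hav_power_mult:
  assumes \<theta>: "W11_on a b \<theta> \<theta>'" and "a \<le> b" and per: "\<theta> b = \<theta> a + 2 * pi * of_int j"
  shows "((\<lambda>t. (1 - haversin (\<theta> t) ^ M) * \<theta>' t) has_integral ((1 - hav_mean M) * (2 * pi * of_int j))) {a..b}"
proof -
  define G where "G z = (1 - hav_mean M) * z - hav_power_primitive M z" for z
  have "(G has_real_derivative ((1 - hav_mean M) * 1 - (haversin z ^ M - hav_mean M))) (at z)" for z
    unfolding G_def[abs_def] by (intro DERIV_diff DERIV_cmult has_real_derivative_hav_power_primitive DERIV_ident)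
  then have "W11_on a b (\<lambda>t. G (\<theta> t)) (\<lambda>t. (1 - haversin (\<theta> t) ^ M) * \<theta>' t)"
    by (intro W11_on_chain[OF \<theta>]) (auto intro!: continuous_intros continuous_on_haversin)
  then have "((\<lambda>t. (1 - haversin (\<theta> t) ^ M) * \<theta>' t) has_integral (G (\<theta> b) - G (\<theta> a))) {a..b}"
    using W11_on_has_integral \<open>a \<le> b\<close> by blast
  moreover have "G (\<theta> b) - G (\<theta> a) = (1 - hav_mean M) * (2 * pi * of_int j)"
    unfolding G_def per using hav_power_primitive_periodic[of M "\<theta> a" j] by (simp add: algebra_simps)
  ultimately show ?thesis by simp
qed

lemma has_integral_hav_defect_mult:
  assumes \<theta>: "W11_on a b \<theta> \<theta>'" and \<omega>: "W11_on a b \<omega> \<omega>'" and "a \<le> b"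
    and \<omega>_ends: "\<omega> a = 0" "\<omega> b = 0" and \<omega>_le: "\<And>t. t \<in> {a..b} \<Longrightarrow> \<bar>\<omega> t\<bar> \<le> c"
  obtains J where "((\<lambda>t. hav_defect N (\<theta> t) * \<omega>' t) has_integral J) {a..b}"
    and "\<bar>J\<bar> \<le> (real N + 1) * c * integral {a..b} (\<lambda>t. \<bar>\<theta>' t\<bar>)"
proof -
  let ?u = "\<lambda>t. hav_defect_deriv N (\<theta> t) * \<theta>' t * \<omega> t"
  have "W11_on a b (\<lambda>t. hav_defect N (\<theta> t)) (\<lambda>t. hav_defect_deriv N (\<theta> t) * \<theta>' t)"
    by (rule W11_on_chain[OF \<theta> has_real_derivative_hav_defect continuous_on_hav_defect_deriv])
  from W11_on_has_integral[OF W11_on_mult[OF this \<omega> \<open>a \<le> b\<close>] \<open>a \<le> b\<close>]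
  have parts: "((\<lambda>t. ?u t + hav_defect N (\<theta> t) * \<omega>' t) has_integral 0) {a..b}"
    using \<omega>_ends by simp
  have "(\<lambda>t. (hav_defect_deriv N (\<theta> t) * \<omega> t) * \<theta>' t) absolutely_integrable_on {a..b}"
    by (intro absolutely_integrable_continuous_mult W11_on_absolutely_integrable[OF \<theta>] continuous_intros
        continuous_on_compose2[OF continuous_on_hav_defect_deriv W11_on_continuous[OF \<theta>]]
        W11_on_continuous[OF \<omega>]) auto
  then have uI: "?u integrable_on {a..b}"
    by (simp add: absolutely_integrable_on_def mult_ac)
  have "((\<lambda>t. hav_defect N (\<theta> t) * \<omega>' t) has_integral (- integral {a..b} ?u)) {a..b}"
    using has_integral_diff[OF parts integrable_integral[OF uI]] by simp
  moreover have "norm (integral {a..b} ?u) \<le> integral {a..b} (\<lambda>t. (real N + 1) * c * \<bar>\<theta>' t\<bar>)"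
  proof (rule integral_norm_bound_integral[OF uI])
    show "(\<lambda>t. (real N + 1) * c * \<bar>\<theta>' t\<bar>) integrable_on {a..b}"
      by (intro integrable_on_mult_right W11_on_abs_integrable[OF \<theta>])
    fix t assume "t \<in> {a..b}"
    then have "\<bar>hav_defect_deriv N (\<theta> t)\<bar> * \<bar>\<omega> t\<bar> \<le> (real N + 1) * c"
      using abs_hav_defect_deriv_le \<omega>_le by (intro mult_mono) auto
    then have "\<bar>hav_defect_deriv N (\<theta> t)\<bar> * \<bar>\<omega> t\<bar> * \<bar>\<theta>' t\<bar> \<le> (real N + 1) * c * \<bar>\<theta>' t\<bar>"
      by (intro mult_right_mono) auto
    then show "norm (?u t) \<le> (real N + 1) * c * \<bar>\<theta>' t\<bar>"
      by (simp add: abs_mult mult_ac)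
  qed
  ultimately show ?thesis
    by (intro that[of "- integral {a..b} ?u"]) simp_all
qed

lemma has_integral_zigzag_slope_mult_null:
  assumes h: "h > 0" and p: "0 \<le> p" "p < 1" and n: "real n * h = b"
    and \<rho>: "W11_on 0 b (\<lambda>t. 0) \<rho>" and K: "continuous_on {0..b} K"
  shows "((\<lambda>t. zigzag_slope L h p t * (K t * \<rho> t)) has_integral 0) {0..b}"
proof -
  have "((\<lambda>t. zigzag_slope L h p t * (K t * \<rho> t)) has_integral (real n * 0)) {0 .. real n * h}"
  proof (rule has_integral_cells[OF h], rule has_integral_zigzag_slope_mult_cell[OF h p])
    fix j s t assume "j < n" and st: "real j * h \<le> s" "s \<le> t" "t \<le> real j * h + h"
    have "(real j + 1) * h \<le> real n * h"
      using \<open>j < n\<close> h by (intro mult_right_mono) auto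
    then have "t \<le> b" using st(3) n by (simp add: algebra_simps)
    moreover have "0 \<le> s" using st(1) h by (smt (verit) of_nat_0_le_iff mult_nonneg_nonneg)
    ultimately show "((\<lambda>t. K t * \<rho> t) has_integral 0) {s..t}"
      using st(2) by (intro has_integral_continuous_mult_null W11_on_subinterval[OF \<rho>]
          continuous_on_subset[OF K]) auto
  qed
  then show ?thesis using n by simp
qed

lemma abs_Im_cnj_mult_diff_le:
  fixes f g gd :: complex
  assumes "norm f = 1" "norm g = 1"
  shows "\<bar>Im (cnj g * gd) - a\<bar> \<le> norm (\<i> * of_real a * f - gd) + 2 * \<bar>a\<bar>"
proof -
  have "\<bar>Im (cnj g * (\<i> * of_real a * f - gd))\<bar> \<le> norm (\<i> * of_real a * f - gd)"
    using abs_Im_le_cmod[of "cnj g * (\<i> * of_real a * f - gd)"] assms by (simp add: norm_mult)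
  moreover have "\<bar>Im (cnj g * (\<i> * of_real a * f))\<bar> \<le> \<bar>a\<bar>"
    using abs_Im_le_cmod[of "cnj g * (\<i> * of_real a * f)"] assms by (simp add: norm_mult)
  moreover have "Im (cnj g * (\<i> * of_real a * f - gd)) = Im (cnj g * (\<i> * of_real a * f)) - Im (cnj g * gd)"
    by (simp add: algebra_simps)
  ultimately show ?thesis by linarith
qed

lemma has_integral_calibration:
  fixes d1 d2 :: int
  assumes h: "h > 0" and p: "0 \<le> p" "p < 1" and n: "real n * h = 2 * pi"
    and D: "L * (2 * p - 1) = of_int d1" and "L > 0" and "d1 \<ge> 0" and r: "0 \<le> r" "r \<le> 1"
    and \<theta>: "W11_on 0 (2*pi) \<theta> \<theta>'" and \<theta>_period: "\<theta> (2*pi) = \<theta> 0 + 2 * pi * of_int (d2 - d1)"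
    and \<rho>: "W11_on 0 (2*pi) (\<lambda>t. 0) \<rho>"
  obtains V where
    "((\<lambda>t. calibration r N L d1 (\<theta> t) (\<theta>' t) (zigzag_slope L h p t) (\<rho> t)) has_integral V) {0..2*pi}"
    "(1 - r) * (1 - hav_mean (Suc N)) * (2 * pi * of_int (d1 - d2))
       - (real N + 1) * ((L + of_int d1) * h) * integral {0..2*pi} (\<lambda>t. \<bar>\<theta>' t\<bar>) \<le> V"
proof -
  have "0 \<le> 2 * pi" by simp
  define \<omega> where "\<omega> t = zigzag L h p t - of_int d1 * t" for t
  have \<omega>: "W11_on 0 (2*pi) \<omega> (\<lambda>t. zigzag_slope L h p t - of_int d1)"
    using W11_on_diff[OF W11_on_zigzag W11_on_cmult[OF W11_on_ident, where c = "of_int d1"]]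
    unfolding \<omega>_def[abs_def] by simp
  have \<omega>_ends: "\<omega> 0 = 0" "\<omega> (2*pi) = 0"
    using zigzag_period[OF h p n D] by (simp_all add: \<omega>_def zigzag_def)
  have \<omega>_le: "\<bar>\<omega> t\<bar> \<le> (L + of_int d1) * h" if "t \<in> {0..2*pi}" for t
    using zigzag_near_linear[OF h p D, of t] that \<open>L > 0\<close> \<open>d1 \<ge> 0\<close> by (simp add: \<omega>_def)
  obtain J where J: "((\<lambda>t. hav_defect N (\<theta> t) * (zigzag_slope L h p t - of_int d1)) has_integral J) {0..2*pi}"
    and J_le: "\<bar>J\<bar> \<le> (real N + 1) * ((L + of_int d1) * h) * integral {0..2*pi} (\<lambda>t. \<bar>\<theta>' t\<bar>)"
    using has_integral_hav_defect_mult[OF \<theta> \<omega> \<open>0 \<le> 2 * pi\<close> \<omega>_ends \<omega>_le] by blast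
  have \<theta>_cont: "continuous_on {0..2*pi} \<theta>" using W11_on_continuous[OF \<theta>] .
  have "((\<lambda>t. (1 - haversin (\<theta> t) ^ Suc N) * \<theta>' t) has_integral
      ((1 - hav_mean (Suc N)) * (2 * pi * of_int (d2 - d1)))) {0..2*pi}"
    by (rule has_integral_one_minus_hav_power_mult[OF \<theta> \<open>0 \<le> 2 * pi\<close> \<theta>_period])
  moreover have "((\<lambda>t. (haversin (\<theta> t) ^ N * sin (\<theta> t)) * \<rho> t) has_integral 0) {0..2*pi}"
    by (intro has_integral_continuous_mult_null[OF \<rho>] continuous_intros \<theta>_cont
        continuous_on_compose2[OF continuous_on_haversin \<theta>_cont]) auto
  moreover have "((\<lambda>t. zigzag_slope L h p t * (sin (\<theta> t) * \<rho> t)) has_integral 0) {0..2*pi}"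
    by (intro has_integral_zigzag_slope_mult_null[OF h p n \<rho>] continuous_intros \<theta>_cont)
  ultimately have "((\<lambda>t. (1 - r) * (- ((1 - haversin (\<theta> t) ^ Suc N) * \<theta>' t))
        + (1 - r) * (hav_defect N (\<theta> t) * (zigzag_slope L h p t - of_int d1))
        - ((1 - r) / 2 * ((haversin (\<theta> t) ^ N * sin (\<theta> t)) * \<rho> t)
           + r / L * (zigzag_slope L h p t * (sin (\<theta> t) * \<rho> t))))
      has_integral ((1 - r) * (- ((1 - hav_mean (Suc N)) * (2 * pi * of_int (d2 - d1)))) + (1 - r) * J
        - ((1 - r) / 2 * 0 + r / L * 0))) {0..2*pi}"
    by (intro has_integral_diff has_integral_add has_integral_mult_right has_integral_neg J)
  moreover have "(\<lambda>t. calibration r N L d1 (\<theta> t) (\<theta>' t) (zigzag_slope L h p t) (\<rho> t))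
      = (\<lambda>t. (1 - r) * (- ((1 - haversin (\<theta> t) ^ Suc N) * \<theta>' t))
        + (1 - r) * (hav_defect N (\<theta> t) * (zigzag_slope L h p t - of_int d1))
        - ((1 - r) / 2 * ((haversin (\<theta> t) ^ N * sin (\<theta> t)) * \<rho> t)
           + r / L * (zigzag_slope L h p t * (sin (\<theta> t) * \<rho> t))))"
    by (simp add: fun_eq_iff calibration_def algebra_simps)
  moreover have "(1 - r) * (- ((1 - hav_mean (Suc N)) * (2 * pi * of_int (d2 - d1)))) + (1 - r) * J
        - ((1 - r) / 2 * 0 + r / L * 0)
      = (1 - r) * (1 - hav_mean (Suc N)) * (2 * pi * of_int (d1 - d2)) + (1 - r) * J"
    by (simp add: algebra_simps del: hav_mean.simps)
  ultimately have "((\<lambda>t. calibration r N L d1 (\<theta> t) (\<theta>' t) (zigzag_slope L h p t) (\<rho> t)) has_integral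
      ((1 - r) * (1 - hav_mean (Suc N)) * (2 * pi * of_int (d1 - d2)) + (1 - r) * J)) {0..2*pi}"
    by (simp only:)
  then show ?thesis
  proof (rule that)
    have "\<bar>(1 - r) * J\<bar> \<le> \<bar>J\<bar>"
      using r by (simp add: abs_mult mult_left_le_one_le)
    then show "(1 - r) * (1 - hav_mean (Suc N)) * (2 * pi * of_int (d1 - d2))
       - (real N + 1) * ((L + of_int d1) * h) * integral {0..2*pi} (\<lambda>t. \<bar>\<theta>' t\<bar>)
       \<le> (1 - r) * (1 - hav_mean (Suc N)) * (2 * pi * of_int (d1 - d2)) + (1 - r) * J"
      using J_le by (simp only: abs_le_iff) linarith
  qed
qed

lemma zigzag_map_deriv_lower_bound:
  fixes d1 d2 :: int
  assumes h: "h > 0" and p: "0 \<le> p" "p < 1" and n: "real n * h = 2 * pi"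
    and D: "L * (2 * p - 1) = of_int d1" and L: "L > 0" and d1: "d1 \<ge> 0"
    and r: "0 \<le> r" "r \<le> 1" and rL: "(1 - r) * of_int d1 * real N / 2 \<le> r * L"
    and g: "W11_circle g gd" "circle_deg g = of_int d2"
  defines "C \<equiv> integral {0..2*pi} (\<lambda>t. norm (zigzag_map_deriv L h p t - gd t))"
  shows "(1 - r) * (1 - hav_mean (Suc N)) * (2 * pi * of_int (d1 - d2))
           - (real N + 1) * ((L + of_int d1) * h) * (C + 4 * pi * L) \<le> C"
proof -
  let ?c = "\<lambda>t. norm (zigzag_map_deriv L h p t - gd t)"
  have "0 \<le> 2 * pi" by simp
  have gdi: "gd absolutely_integrable_on {0..2*pi}"
    and geq: "\<And>t. t \<in> {0..2*pi} \<Longrightarrow> g t = g 0 + integral {0..t} gd"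
    and g1: "\<And>t. t \<in> {0..2*pi} \<Longrightarrow> norm (g t) = 1"
    using g(1) unfolding W11_circle_def by blast+
  obtain \<psi> where \<psi>: "W11_on 0 (2*pi) \<psi> (\<lambda>t. Im (cnj (g t) * gd t))"
    and g_exp: "\<And>t. t \<in> {0..2*pi} \<Longrightarrow> g t = exp (\<i> * of_real (\<psi> t))"
    and \<psi>_period: "\<psi> (2*pi) = \<psi> 0 + 2 * pi * of_int d2"
    using W11_circle_phase[OF g] by blast
  define \<theta> where "\<theta> t = \<psi> t - zigzag L h p t" for t
  define \<theta>' where "\<theta>' t = Im (cnj (g t) * gd t) - zigzag_slope L h p t" for t
  define \<rho> where "\<rho> t = Re (cnj (g t) * gd t)" for t
  have \<theta>: "W11_on 0 (2*pi) \<theta> \<theta>'"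
    unfolding \<theta>_def[abs_def] \<theta>'_def[abs_def] by (rule W11_on_diff[OF \<psi> W11_on_zigzag])
  have \<theta>_period: "\<theta> (2*pi) = \<theta> 0 + 2 * pi * of_int (d2 - d1)"
    using \<psi>_period zigzag_period[OF h p n D] by (simp add: \<theta>_def zigzag_def algebra_simps)
  have \<rho>: "W11_on 0 (2*pi) (\<lambda>t. 0) \<rho>"
    unfolding \<rho>_def[abs_def] by (rule W11_on_Re_cnj_deriv_zero[OF \<open>0 \<le> 2 * pi\<close> gdi geq g1])
  obtain V where V: "((\<lambda>t. calibration r N L d1 (\<theta> t) (\<theta>' t) (zigzag_slope L h p t) (\<rho> t)) has_integral V) {0..2*pi}"
    and V_ge: "(1 - r) * (1 - hav_mean (Suc N)) * (2 * pi * of_int (d1 - d2))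
       - (real N + 1) * ((L + of_int d1) * h) * integral {0..2*pi} (\<lambda>t. \<bar>\<theta>' t\<bar>) \<le> V"
    using has_integral_calibration[OF h p n D L d1 r \<theta> \<theta>_period \<rho>] by blast
  have slope: "\<bar>zigzag_slope L h p t\<bar> = L" for t
    using L by (simp add: zigzag_slope_def)
  have "zigzag_map_deriv L h p absolutely_integrable_on {0..2*pi}"
    using zigzag_map_W11(1)[OF h p n D] unfolding W11_circle_def by blast
  then have "(\<lambda>t. zigzag_map_deriv L h p t - gd t) absolutely_integrable_on {0..2*pi}"
    using gdi by (rule set_integral_diff(1))
  then have cI: "?c integrable_on {0..2*pi}"
    by (simp add: absolutely_integrable_on_def)
  have VC: "V \<le> C"
  proof (rule has_integral_le[OF V integrable_integral[OF cI], folded C_def])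
    fix t assume t: "t \<in> {0..2*pi}"
    have "calibration r N L d1 (\<theta> t) (\<theta>' t) (zigzag_slope L h p t) (\<rho> t)
        \<le> norm (\<i> * of_real (zigzag_slope L h p t) * zigzag_map L h p t - gd t)"
      unfolding \<theta>_def \<theta>'_def \<rho>_def g_exp[OF t] zigzag_map_def
      by (rule calibration_le_norm_exp) (use slope L r rL d1 in auto)
    then show "calibration r N L d1 (\<theta> t) (\<theta>' t) (zigzag_slope L h p t) (\<rho> t) \<le> ?c t"
      by (simp add: zigzag_map_deriv_def)
  qed
  have "integral {0..2*pi} (\<lambda>t. \<bar>\<theta>' t\<bar>) \<le> integral {0..2*pi} (\<lambda>t. ?c t + 2 * L)"
  proof (rule integral_le)
    show "(\<lambda>t. \<bar>\<theta>' t\<bar>) integrable_on {0..2*pi}" using W11_on_abs_integrable[OF \<theta>] .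
    show "(\<lambda>t. ?c t + 2 * L) integrable_on {0..2*pi}" using cI by (intro integrable_add) auto
    fix t assume "t \<in> {0..2*pi}"
    then show "\<bar>\<theta>' t\<bar> \<le> ?c t + 2 * L"
      using abs_Im_cnj_mult_diff_le[of "zigzag_map L h p t" "g t" "gd t" "zigzag_slope L h p t"] g1 slope
      by (simp add: \<theta>'_def zigzag_map_deriv_def zigzag_map_def)
  qed
  moreover have "integral {0..2*pi} (\<lambda>t. ?c t + 2 * L) = C + 4 * pi * L"
    unfolding C_def by (subst integral_add) (use cI in auto)
  ultimately have "integral {0..2*pi} (\<lambda>t. \<bar>\<theta>' t\<bar>) \<le> C + 4 * pi * L"
    by simp
  moreover have "0 \<le> (real N + 1) * ((L + of_int d1) * h)"
    using L d1 h by simp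
  ultimately have "(real N + 1) * ((L + of_int d1) * h) * integral {0..2*pi} (\<lambda>t. \<bar>\<theta>' t\<bar>)
      \<le> (real N + 1) * ((L + of_int d1) * h) * (C + 4 * pi * L)"
    by (rule mult_left_mono)
  then show ?thesis
    using V_ge VC by linarith
qed

section \<open>Choice of the parameters\<close>

lemma hav_mean_le:
  assumes "\<delta> > 0" "(8 * pi / \<delta>)\<^sup>2 \<le> real N"
  shows "hav_mean (Suc N) \<le> \<delta> / (8 * pi)"
proof -
  have "(hav_mean (Suc N))\<^sup>2 \<le> 1 / (2 * real (Suc N) + 1)" by (rule hav_mean_power2_le)
  also have "\<dots> \<le> 1 / (8 * pi / \<delta>)\<^sup>2"
  proof -
    have "(8 * pi / \<delta>)\<^sup>2 \<le> 2 * real (Suc N) + 1" using assms(2) by simp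
    moreover have "(8 * pi / \<delta>)\<^sup>2 > 0" using assms(1) by simp
    ultimately show ?thesis by (intro divide_left_mono) auto
  qed
  also have "\<dots> = (\<delta> / (8 * pi))\<^sup>2" by (simp add: power_divide)
  finally have "(hav_mean (Suc N))\<^sup>2 \<le> (\<delta> / (8 * pi))\<^sup>2" .
  moreover have "0 \<le> \<delta> / (8 * pi)" using assms(1) by simp
  ultimately show ?thesis by (rule power2_le_imp_le)
qed

lemma fine_circle_grid:
  assumes "K \<ge> 0" "\<epsilon> > 0"
  obtains n :: nat where "n > 0" "K * (2 * pi / real n) \<le> \<epsilon>"
proof
  define n where "n = nat \<lceil>K * (2 * pi) / \<epsilon>\<rceil> + 1"
  show "n > 0" by (simp add: n_def)
  have "K * (2 * pi) / \<epsilon> \<le> real n" unfolding n_def by linarith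
  then have "K * (2 * pi) \<le> \<epsilon> * real n" using assms(2) by (simp add: field_simps)
  then show "K * (2 * pi / real n) \<le> \<epsilon>" using \<open>n > 0\<close> by (simp add: field_simps)
qed

lemma calibration_parameters:
  fixes d1 :: int and \<delta> :: real
  assumes "d1 > 0" "0 < \<delta>" "\<delta> \<le> 1"
  obtains N n L h p r where "h > 0" "0 \<le> p" "p < 1" "real n * h = 2 * pi"
    "L * (2 * p - 1) = of_int d1" "L > 0" "0 \<le> r" "r \<le> 1"
    "(1 - r) * of_int d1 * real N / 2 \<le> r * L"
    "r \<le> \<delta> / (8 * pi)" "hav_mean (Suc N) \<le> \<delta> / (8 * pi)"
    "(real N + 1) * ((L + of_int d1) * h) \<le> \<delta> / (8 * pi * L + 4 * pi)"
proof -
  have d1: "real_of_int d1 > 0" using assms by simp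
  define N :: nat where "N = nat \<lceil>(8 * pi / \<delta>)\<^sup>2\<rceil>"
  have m_le: "hav_mean (Suc N) \<le> \<delta> / (8 * pi)"
    by (rule hav_mean_le) (use assms in \<open>auto simp: N_def\<close>)
  define L where "L = real_of_int d1 + 1 + 4 * pi * real_of_int d1 * real N / \<delta>"
  have "4 * pi * real_of_int d1 * real N / \<delta> \<ge> 0" using d1 assms by simp
  then have L: "L > 0" "L > real_of_int d1" unfolding L_def using d1 by linarith+
  define r where "r = real_of_int d1 * real N / (2 * L)"
  have r0: "0 \<le> r" unfolding r_def using d1 L by simp
  have r_le: "r \<le> \<delta> / (8 * pi)"
  proof -
    have "8 * pi * (real_of_int d1 * real N) = 2 * \<delta> * (4 * pi * real_of_int d1 * real N / \<delta>)"
      using assms by (simp add: field_simps)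
    also have "\<dots> \<le> 2 * \<delta> * L" unfolding L_def using assms d1 by (intro mult_left_mono) auto
    finally show ?thesis unfolding r_def using L by (simp add: field_simps)
  qed
  have "\<delta> / (8 * pi) \<le> 1" using assms pi_gt3 by (simp add: field_simps)
  then have r1: "r \<le> 1" using r_le by linarith
  have rL: "(1 - r) * real_of_int d1 * real N / 2 \<le> r * L"
  proof -
    have "(1 - r) * (real_of_int d1 * real N) \<le> 1 * (real_of_int d1 * real N)"
      using r0 d1 by (intro mult_right_mono) auto
    moreover have "r * L = real_of_int d1 * real N / 2" unfolding r_def using L by simp
    ultimately show ?thesis by simp
  qed
  have "(real N + 1) * (L + real_of_int d1) \<ge> 0" and "\<delta> / (8 * pi * L + 4 * pi) > 0"
    using L d1 assms by (simp_all add: add_pos_pos)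
  then obtain n :: nat where "n > 0"
    and e_le: "(real N + 1) * (L + real_of_int d1) * (2 * pi / real n) \<le> \<delta> / (8 * pi * L + 4 * pi)"
    by (rule fine_circle_grid)
  define h where "h = 2 * pi / real n"
  have h: "h > 0" "real n * h = 2 * pi" unfolding h_def using \<open>n > 0\<close> by simp_all
  define p where "p = (L + real_of_int d1) / (2 * L)"
  have p: "0 \<le> p" "p < 1" unfolding p_def using L d1 by (auto simp: field_simps)
  have D: "L * (2 * p - 1) = of_int d1" unfolding p_def using L by (simp add: field_simps)
  show ?thesis
    using that[OF h(1) p h(2) D L(1) r0 r1 rL r_le m_le] e_le by (simp add: h_def mult.assoc)
qed

lemma le_of_calibration_estimate:
  fixes C k r m e L \<delta> :: real
  assumes est: "(1 - r) * (1 - m) * (2 * pi * k) - e * (C + 4 * pi * L) \<le> C"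
    and k: "k \<ge> 1" and r: "0 \<le> r" "r \<le> \<delta> / (8 * pi)" and m: "0 \<le> m" "m \<le> \<delta> / (8 * pi)"
    and e: "0 \<le> e" "e \<le> \<delta> / (8 * pi * L + 4 * pi)" and L: "L > 0" and \<delta>: "\<delta> > 0"
  shows "(2 * pi - \<delta>) * k \<le> C"
proof -
  have rm: "(1 - r) * (1 - m) \<ge> 1 - \<delta> / (4 * pi)"
  proof -
    have "(1 - r) * (1 - m) = 1 - r - m + r * m" by (simp add: algebra_simps)
    moreover have "r * m \<ge> 0" using r m by simp
    moreover have "r + m \<le> \<delta> / (4 * pi)" using r m by (simp add: field_simps)
    ultimately show ?thesis by linarith
  qed
  have k0: "k > 0" using k by simp
  have A: "(1 - r) * (1 - m) * (2 * pi * k) \<ge> (1 - \<delta> / (4 * pi)) * (2 * pi * k)"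
    using rm k0 by (intro mult_right_mono) auto
  have B: "(1 - \<delta> / (4 * pi)) * (2 * pi * k) = 2 * pi * k - \<delta> * k / 2" by (simp add: field_simps)
  have epos: "8 * pi * L + 4 * pi > 0" using L by (simp add: add_pos_pos)
  have e2: "e * (8 * pi * L + 4 * pi) \<le> \<delta>" using e epos by (simp add: field_simps)
  have "e * (4 * pi * L) + e * (2 * pi) * k \<le> e * (4 * pi * L) * k + e * (2 * pi) * k"
    using e L k by (intro add_right_mono) (auto intro: mult_le_cancel_left1[THEN iffD2])
  also have "\<dots> = (e * (8 * pi * L + 4 * pi)) * k / 2" by (simp add: algebra_simps)
  also have "\<dots> \<le> \<delta> * k / 2" using e2 k0 by (intro divide_right_mono mult_right_mono) auto
  finally have E: "e * (4 * pi * L) + e * (2 * pi) * k \<le> \<delta> * k / 2" .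
  have "C * (1 + e) \<ge> 2 * pi * k - \<delta> * k / 2 - e * (4 * pi * L)"
    using est A B by (simp add: algebra_simps)
  also have "2 * pi * k - \<delta> * k / 2 - e * (4 * pi * L) \<ge> (2 * pi - \<delta>) * k * (1 + e)"
  proof -
    have "(2 * pi - \<delta>) * k * (1 + e) = (2 * pi - \<delta>) * k + (2 * pi) * k * e - \<delta> * k * e" by (simp add: algebra_simps)
    moreover have "\<delta> * k * e \<ge> 0" using \<delta> k0 e by simp
    ultimately show ?thesis using E by (simp add: algebra_simps)
  qed
  finally have "(2 * pi - \<delta>) * k * (1 + e) \<le> C * (1 + e)" .
  then show ?thesis using e by (simp add: mult_le_cancel_right)
qed

lemma zigzag_map_deriv_far:
  fixes d1 d2 :: int
  assumes "d1 > 0" and "d2 < d1" and "\<delta> > 0"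
  obtains h p n L where "h > 0" "0 \<le> p" "p < 1" "real n * h = 2 * pi" "L * (2 * p - 1) = of_int d1"
    "\<And>g gd. W11_circle g gd \<Longrightarrow> circle_deg g = of_int d2 \<Longrightarrow>
       (2 * pi - \<delta>) * real_of_int (d1 - d2) \<le> integral {0..2*pi} (\<lambda>t. norm (zigzag_map_deriv L h p t - gd t))"
proof -
  define \<delta>' where "\<delta>' = min \<delta> 1"
  have \<delta>': "0 < \<delta>'" "\<delta>' \<le> 1" "\<delta>' \<le> \<delta>" using assms by (auto simp: \<delta>'_def)
  obtain N n L h p r where h: "h > 0" and p: "0 \<le> p" "p < 1" and n: "real n * h = 2 * pi"
    and D: "L * (2 * p - 1) = of_int d1" and L: "L > 0" and r: "0 \<le> r" "r \<le> 1"
    and rL: "(1 - r) * of_int d1 * real N / 2 \<le> r * L" and small: "r \<le> \<delta>' / (8 * pi)"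
      "hav_mean (Suc N) \<le> \<delta>' / (8 * pi)" "(real N + 1) * ((L + of_int d1) * h) \<le> \<delta>' / (8 * pi * L + 4 * pi)"
    by (rule calibration_parameters[OF \<open>d1 > 0\<close> \<delta>'(1,2)])
  have "d1 \<ge> 0" and k: "real_of_int (d1 - d2) \<ge> 1" using assms by simp_all
  show ?thesis
  proof (rule that[OF h p n D])
    fix g gd assume "W11_circle g gd" "circle_deg g = of_int d2"
    from zigzag_map_deriv_lower_bound[OF h p n D L \<open>d1 \<ge> 0\<close> r rL this]
    have est: "(1 - r) * (1 - hav_mean (Suc N)) * (2 * pi * of_int (d1 - d2))
        - (real N + 1) * ((L + of_int d1) * h) * (integral {0..2*pi} (\<lambda>t. norm (zigzag_map_deriv L h p t - gd t)) + 4 * pi * L)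
      \<le> integral {0..2*pi} (\<lambda>t. norm (zigzag_map_deriv L h p t - gd t))" .
    have "0 \<le> (real N + 1) * ((L + of_int d1) * h)"
      using L h \<open>d1 \<ge> 0\<close> by simp
    from le_of_calibration_estimate[OF est k r(1) small(1) hav_mean_nonneg small(2) this small(3) L \<delta>'(1)]
    have "(2 * pi - \<delta>') * real_of_int (d1 - d2)
        \<le> integral {0..2*pi} (\<lambda>t. norm (zigzag_map_deriv L h p t - gd t))" .
    moreover have "(2 * pi - \<delta>) * real_of_int (d1 - d2) \<le> (2 * pi - \<delta>') * real_of_int (d1 - d2)"
      using \<delta>' k by (intro mult_right_mono) auto
    ultimately show "(2 * pi - \<delta>) * real_of_int (d1 - d2)
        \<le> integral {0..2*pi} (\<lambda>t. norm (zigzag_map_deriv L h p t - gd t))"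
      by linarith
  qed
qed

theorem lemma3p1:
  fixes d1 d2 :: int and \<delta> :: real
  assumes "d1 > 0" and "d2 < d1" and "\<delta> > 0"
  shows "\<exists>f fd. W11_circle f fd \<and> circle_deg f = of_int d1 \<and>
           (\<forall>g gd. W11_circle g gd \<and> circle_deg g = of_int d2 \<longrightarrow>
              integral {0..2*pi} (\<lambda>t. norm (fd t - gd t)) \<ge> (2*pi - \<delta>) * real_of_int (d1 - d2))"
proof (rule zigzag_map_deriv_far[OF assms])
  fix h p n L
  assume h: "h > 0" and p: "0 \<le> p" "p < 1" and n: "real n * h = 2 * pi"
    and D: "L * (2 * p - 1) = of_int d1"
    and far: "\<And>g gd. W11_circle g gd \<Longrightarrow> circle_deg g = of_int d2 \<Longrightarrow>
       (2 * pi - \<delta>) * real_of_int (d1 - d2) \<le> integral {0..2*pi} (\<lambda>t. norm (zigzag_map_deriv L h p t - gd t))"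
  show ?thesis
  proof (intro exI conjI allI impI)
    show "W11_circle (zigzag_map L h p) (zigzag_map_deriv L h p)"
      and "circle_deg (zigzag_map L h p) = of_int d1"
      using zigzag_map_W11[OF h p n D] by blast+
    fix g gd assume g: "W11_circle g gd \<and> circle_deg g = of_int d2"
    show "(2 * pi - \<delta>) * real_of_int (d1 - d2)
        \<le> integral {0..2*pi} (\<lambda>t. norm (zigzag_map_deriv L h p t - gd t))"
      by (rule far[OF conjunct1[OF g] conjunct2[OF g]])
  qed
qed

end
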